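(* Let $\mathfrak{g}=\mathfrak{gl}(p,q)$ and $k\ge 1$. Then the transgression of $P_k$ is $t(P_k)=(-1)^{k-1}\,k\,\Lambda_{2k-1}$.
   Context: Setup for a finite-dimensional complex Lie superalgebra $\mathfrak{g}=\mathfrak{g}_{\bar 0}\oplus\mathfrak{g}_{\bar 1}$; elements are homogeneous, lower-case letters denote their $\mathbb{Z}_2$-degrees. For $\mathcal{X}=(X_1,\dots,X_k)$ and $\sigma\in\mathfrak{S}_k$ let $\epsilon(\sigma,\mathcal{X})=(-1)^{K}$, $K$ the number of pairs $i<j$ with $\sigma(i)>\sigma(j)$ and $X_{\sigma(i)},X_{\sigma(j)}$ both odd. A $k$-linear form $F$ on $\mathfrak{g}$ has degree $f$ if $F(X_1,\dots,X_k)\neq0$ only when $x_1+\dots+x_k+f=0$ in $\mathbb{Z}_2$ (scalars are even). $F$ is supersymmetric if $\epsilon(\sigma,\mathcal{X})F(X_{\sigma(1)},\dots,X_{\sigma(k)})=F(X_1,\dots,X_k)$ for all $\sigma$, and skew supersymmetric if $\epsilon(\sigma)\epsilon(\sigma,\mathcal{X})F(X_{\sigma(1)},\dots)=F(X_1,\dots)$; $\mathcal{P}(\mathfrak{g})$, $\mathcal{A}(\mathfrak{g})$ denote the spaces of such forms (of all orders). Super tensor product: $(F\boxtimes G)(X_1,\dots,X_{a+b})=(-1)^{g(x_1+\dots+x_a)}F(X_1,\dots,X_a)G(X_{a+1},\dots,X_{a+b})$ for $F$ an $a$-form, $G$ a $b$-form of degree $g$. With $S(F)=\sum_\sigma\epsilon(\sigma,\mathcal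 X)F(X_{\sigma(1)},\dots)$ and $A(F)=\sum_\sigma\epsilon(\sigma)\epsilon(\sigma,\mathcal X)F(X_{\sigma(1)},\dots)$, set $F\cdot G=\frac1{a!b!}S(F\boxtimes G)$ on $\mathcal P(\mathfrak g)$ and $F\wedge G=\frac1{a!b!}A(F\boxtimes G)$ on $\mathcal A(\mathfrak g)$. For $X\in\mathfrak g$ and $F$ of degree $f$, $D_X(F)(X_1,\dots,X_{a-1})=(-1)^{xf}F(X,X_1,\dots,X_{a-1})$. The map $d:\mathcal A(\mathfrak g)\to\mathcal A(\mathfrak g)$ is the super derivation of $(\mathcal A(\mathfrak g),\wedge)$ raising the order by one, with $d\phi(X_1,X_2)=-\phi([X_1,X_2])$ for $\phi\in\mathfrak g^*$ (explicitly $dF(X_1,\dots,X_{m+1})=\sum_{i<j}(-1)^{i+j}(-1)^{x_i(x_1+\dots+x_{i-1})}(-1)^{x_j(x_1+\dots+\widehat{x_i}+\dots+x_{j-1})}F([X_i,X_j],X_1,\dots,\widehat{X_i},\dots,\widehat{X_j},\dots,X_{m+1})$). Let $s:\mathcal P(\mathfrak g)\to\mathcal A(\mathfrak g)$ be the algebra homomorphism with $s(\phi)=d\phi$ for $\phi\in\mathfrak g^*$. Choose a basis $X_1,\dots,X_m$ of $\mathfrak g_{\bar0}$ with dual basis $\Omega_1,\dots,\Omega_m$ and a basis $Y_1,\dots,Y_r$ of $\mathfrak g_{\bar1}$ with dual basis $\phi_1,\dots,\phi_r$. The transgression $t:\mathcal P(\mathfrak g)\to\mathcal A(\mathfrak g)$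 is $t(P)=\sum_i\Omega_i\wedge s(D_{X_i}P)-\sum_j\phi_j\wedge s(D_{Y_j}P)$ (basis independent). Now $\mathfrak g=\mathfrak{gl}(p,q)=\mathrm{End}(V)$, $V=V_{\bar0}\oplus V_{\bar1}$, $\dim V_{\bar0}=p$, $\dim V_{\bar1}=q$, with super trace $\mathrm{str}\begin{pmatrix}a&b\\c&d\end{pmatrix}=\mathrm{tr}(a)-\mathrm{tr}(d)$. For $k\ge1$ and homogeneous $X_i$: $\mathcal P_k(X_1,\dots,X_k)=\sum_{\sigma\in\mathfrak S_k}\epsilon(\sigma,\mathcal X)X_{\sigma(1)}\cdots X_{\sigma(k)}$, $\mathcal A_k(X_1,\dots,X_k)=\sum_\sigma\epsilon(\sigma)\epsilon(\sigma,\mathcal X)X_{\sigma(1)}\cdots X_{\sigma(k)}$ (matrix products), $P_k=\mathrm{str}\circ\mathcal P_k\in\mathcal P(\mathfrak g)$, $\Lambda_k=\mathrm{str}\circ\mathcal A_k\in\mathcal A(\mathfrak g)$. *)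

theory Defs
  imports Complex_Main "HOL-Combinatorics.Permutations"
begin

text \<open>The Lie superalgebra gl(p,q) = End(V), dim V_0 = p, dim V_1 = q, realised as
  (p+q) x (p+q) complex matrices (functions nat => nat => complex vanishing outside
  the index range {0..<p+q}).\<close>

type_synonym smat = "nat \<Rightarrow> nat \<Rightarrow> complex"
type_synonym sform = "smat list \<Rightarrow> complex"

definition odd_idx :: "nat \<Rightarrow> nat \<Rightarrow> bool" where
  "odd_idx p i \<longleftrightarrow> p \<le> i"

definition gl :: "nat \<Rightarrow> nat \<Rightarrow> smat set" where
  "gl p q = {A. \<forall>i j. A i j \<noteq> 0 \<longrightarrow> i < p + q \<and> j < p + q}"

definition even_elt :: "nat \<Rightarrow> nat \<Rightarrow> smat \<Rightarrow> bool" where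
  "even_elt p q A \<longleftrightarrow> A \<in> gl p q \<and> (\<forall>i j. A i j \<noteq> 0 \<longrightarrow> odd_idx p i = odd_idx p j)"

definition odd_elt :: "nat \<Rightarrow> nat \<Rightarrow> smat \<Rightarrow> bool" where
  "odd_elt p q A \<longleftrightarrow> A \<in> gl p q \<and> (\<forall>i j. A i j \<noteq> 0 \<longrightarrow> odd_idx p i \<noteq> odd_idx p j)"

definition homog :: "nat \<Rightarrow> nat \<Rightarrow> smat \<Rightarrow> bool" where
  "homog p q A \<longleftrightarrow> even_elt p q A \<or> odd_elt p q A"

text \<open>Z2-degree of a homogeneous element (0 = even, 1 = odd; the zero matrix is even).\<close>
definition par :: "nat \<Rightarrow> smat \<Rightarrow> nat" where
  "par p A = (if (\<forall>i j. A i j \<noteq> 0 \<longrightarrow> odd_idx p i = odd_idx p j) then 0 else 1)"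

definition parsum :: "nat \<Rightarrow> smat list \<Rightarrow> nat" where
  "parsum p Xs = sum_list (map (par p) Xs)"

definition mmult :: "nat \<Rightarrow> smat \<Rightarrow> smat \<Rightarrow> smat" where
  "mmult n A B = (\<lambda>i j. \<Sum>l<n. A i l * B l j)"

definition mone :: "nat \<Rightarrow> smat" where
  "mone n = (\<lambda>i j. if i = j \<and> i < n then 1 else 0)"

definition mprod :: "nat \<Rightarrow> smat list \<Rightarrow> smat" where
  "mprod n Xs = foldr (mmult n) Xs (mone n)"

definition str :: "nat \<Rightarrow> nat \<Rightarrow> smat \<Rightarrow> complex" where
  "str p q A = (\<Sum>i<p. A i i) - (\<Sum>i\<in>{p..<p+q}. A i i)"

definition sbracket :: "nat \<Rightarrow> nat \<Rightarrow> smat \<Rightarrow> smat \<Rightarrow> smat" where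
  "sbracket p q X Y = (\<lambda>i j. mmult (p+q) X Y i j
      - (-1) ^ (par p X * par p Y) * mmult (p+q) Y X i j)"

definition permute :: "nat \<Rightarrow> (nat \<Rightarrow> nat) \<Rightarrow> smat list \<Rightarrow> smat list" where
  "permute k \<sigma> Xs = map (\<lambda>i. Xs ! \<sigma> i) [0..<k]"

definition koszul :: "nat \<Rightarrow> nat \<Rightarrow> (nat \<Rightarrow> nat) \<Rightarrow> smat list \<Rightarrow> complex" where
  "koszul p k \<sigma> Xs = (-1) ^ card {(i, j). i < j \<and> j < k \<and> \<sigma> j < \<sigma> i
       \<and> par p (Xs ! \<sigma> i) = 1 \<and> par p (Xs ! \<sigma> j) = 1}"

definition symz :: "nat \<Rightarrow> nat \<Rightarrow> sform \<Rightarrow> sform" where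
  "symz p k F = (\<lambda>Xs. \<Sum>\<sigma>\<in>{\<sigma>. \<sigma> permutes {..<k}}. koszul p k \<sigma> Xs * F (permute k \<sigma> Xs))"

definition altz :: "nat \<Rightarrow> nat \<Rightarrow> sform \<Rightarrow> sform" where
  "altz p k F = (\<lambda>Xs. \<Sum>\<sigma>\<in>{\<sigma>. \<sigma> permutes {..<k}}.
      of_int (sign \<sigma>) * koszul p k \<sigma> Xs * F (permute k \<sigma> Xs))"

text \<open>Degree-g component of a form (a form F has degree f iff F = degpart f F).\<close>
definition degpart :: "nat \<Rightarrow> nat \<Rightarrow> sform \<Rightarrow> sform" where
  "degpart p g G = (\<lambda>Xs. if even (parsum p Xs + g) then G Xs else 0)"

text \<open>Super tensor product of an a-form F with G (extended bilinearly over the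
  degree components of G).\<close>
definition boxt :: "nat \<Rightarrow> nat \<Rightarrow> sform \<Rightarrow> sform \<Rightarrow> sform" where
  "boxt p a F G = (\<lambda>Xs. \<Sum>g\<in>{0, 1::nat}.
      (-1) ^ (g * parsum p (take a Xs)) * F (take a Xs) * degpart p g G (drop a Xs))"

definition swedge :: "nat \<Rightarrow> nat \<Rightarrow> nat \<Rightarrow> sform \<Rightarrow> sform \<Rightarrow> sform" where
  "swedge p a b F G = (\<lambda>Xs. altz p (a + b) (boxt p a F G) Xs / (fact a * fact b))"

definition Dop :: "nat \<Rightarrow> smat \<Rightarrow> sform \<Rightarrow> sform" where
  "Dop p X F = (\<lambda>Xs. \<Sum>f\<in>{0, 1::nat}. (-1) ^ (par p X * f) * degpart p f F (X # Xs))"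

text \<open>The differential d (explicit formula, indices shifted to start at 0).\<close>
definition dop :: "nat \<Rightarrow> nat \<Rightarrow> sform \<Rightarrow> sform" where
  "dop p q F = (\<lambda>Xs. \<Sum>j<length Xs. \<Sum>i<j.
      (-1) ^ (i + j)
      * (-1) ^ (par p (Xs ! i) * parsum p (take i Xs))
      * (-1) ^ (par p (Xs ! j) * (parsum p (take j Xs) - par p (Xs ! i)))
      * F (sbracket p q (Xs ! i) (Xs ! j)
            # map (nth Xs) (filter (\<lambda>t. t \<noteq> i \<and> t \<noteq> j) [0..<length Xs])))"

definition elem :: "nat \<Rightarrow> nat \<Rightarrow> smat" where
  "elem a b = (\<lambda>i j. if i = a \<and> j = b then 1 else 0)"

definition dualf :: "nat \<Rightarrow> nat \<Rightarrow> sform" where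
  "dualf a b = (\<lambda>Xs. hd Xs a b)"

definition basis_idx :: "nat \<Rightarrow> nat \<Rightarrow> (nat \<times> nat) set" where
  "basis_idx p q = {0..<p+q} \<times> {0..<p+q}"

definition bodd :: "nat \<Rightarrow> nat \<times> nat \<Rightarrow> bool" where
  "bodd p ab \<longleftrightarrow> odd_idx p (fst ab) \<noteq> odd_idx p (snd ab)"

fun wedge_list :: "nat \<Rightarrow> sform list \<Rightarrow> sform" where
  "wedge_list p [] = (\<lambda>Xs. 1)"
| "wedge_list p (\<alpha> # \<alpha>s) = swedge p 2 (2 * length \<alpha>s) \<alpha> (wedge_list p \<alpha>s)"

text \<open>The algebra homomorphism s : P(g) -> A(g) with s(phi) = d phi, on a
  supersymmetric a-form F.  It is obtained by writing
  F = (1/a!) Sum_{i_1..i_a} (-1)^{#odd pairs} F(E_{i_1},...,E_{i_a}) e_{i_1}...e_{i_a}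
  (e_i the dual basis) and applying s multiplicatively.\<close>
definition smap :: "nat \<Rightarrow> nat \<Rightarrow> nat \<Rightarrow> sform \<Rightarrow> sform" where
  "smap p q a F = (\<lambda>Xs. (\<Sum>idx\<in>{idx. length idx = a \<and> set idx \<subseteq> basis_idx p q}.
      (-1) ^ card {(u, v). u < v \<and> v < a \<and> bodd p (idx ! u) \<and> bodd p (idx ! v)}
      * F (map (\<lambda>(x, y). elem x y) idx)
      * wedge_list p (map (\<lambda>(x, y). dop p q (dualf x y)) idx) Xs) / fact a)"

definition transg :: "nat \<Rightarrow> nat \<Rightarrow> nat \<Rightarrow> sform \<Rightarrow> sform" where
  "transg p q k P = (\<lambda>Xs.
      (\<Sum>ab\<in>{ab\<in>basis_idx p q. \<not> bodd p ab}.
          swedge p 1 (2 * (k - 1)) (dualf (fst ab) (snd ab))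
             (smap p q (k - 1) (Dop p (elem (fst ab) (snd ab)) P)) Xs)
    - (\<Sum>ab\<in>{ab\<in>basis_idx p q. bodd p ab}.
          swedge p 1 (2 * (k - 1)) (dualf (fst ab) (snd ab))
             (smap p q (k - 1) (Dop p (elem (fst ab) (snd ab)) P)) Xs))"

definition Pk :: "nat \<Rightarrow> nat \<Rightarrow> nat \<Rightarrow> sform" where
  "Pk p q k = (\<lambda>Xs. str p q (\<lambda>i j. \<Sum>\<sigma>\<in>{\<sigma>. \<sigma> permutes {..<k}}.
      koszul p k \<sigma> Xs * mprod (p+q) (permute k \<sigma> Xs) i j))"

definition Lamk :: "nat \<Rightarrow> nat \<Rightarrow> nat \<Rightarrow> sform" where
  "Lamk p q k = (\<lambda>Xs. str p q (\<lambda>i j. \<Sum>\<sigma>\<in>{\<sigma>. \<sigma> permutes {..<k}}.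
      of_int (sign \<sigma>) * koszul p k \<sigma> Xs * mprod (p+q) (permute k \<sigma> Xs) i j))"

end

(*
  Write k = m + 1 and evaluate t(P_k) on Y_0, ..., Y_2m.  Expanding s(D_E P_k) in the
  basis of elementary matrices E, each d(phi) contributes -phi([U, V]), the sign of an odd
  basis element cancels its Koszul sign, and summing the coordinates of Y_0 rebuilds
  P_k(Y_0, ...).  This gives

    t(P_k)(Y_0, ..., Y_2m) = (-1)^m / (m! 2^m) Alt(P_k(Y_0, [Y_1, Y_2], ..., [Y_2m-1, Y_2m])),

  where Alt is the (unnormalized) super antisymmetrization.  Under Alt, the transposition
  of Y_2j+1 and Y_2j+2 maps one term of their bracket to the other, so each bracket may be
  replaced by 2 Y_2j+1 Y_2j+2.  Finally P_k(Y_0, Y_1 Y_2, ..., Y_2m-1 Y_2m) is a signed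
  sum over the permutations of the m + 1 blocks; each of them is an even permutation of the
  Y_i with the same Koszul sign, hence is absorbed by Alt, which leaves
  (m + 1)! Lambda_2m+1.  Altogether (-1)^m / (m! 2^m) * 2^m (m + 1)! = (-1)^m (m + 1).
*)

theory Submission
  imports Defs
begin

section \<open>Koszul signs of permutations\<close>

definition koszul_sign :: "(nat \<Rightarrow> bool) \<Rightarrow> (nat \<Rightarrow> nat) \<Rightarrow> nat \<Rightarrow> complex" where
  "koszul_sign D \<sigma> N =
     (-1) ^ card {(i, j). i < j \<and> j < N \<and> \<sigma> j < \<sigma> i \<and> D (\<sigma> i) \<and> D (\<sigma> j)}"

definition index_pairs :: "nat \<Rightarrow> (nat \<times> nat) set" where
  "index_pairs N = {(i, j). i < j \<and> j < N}"

lemma finite_index_pairs [simp]: "finite (index_pairs N)"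
  by (rule finite_subset[of _ "{..<N} \<times> {..<N}"]) (auto simp: index_pairs_def)

lemma koszul_eq_koszul_sign: "koszul p N \<sigma> Xs = koszul_sign (\<lambda>a. par p (Xs ! a) = 1) \<sigma> N"
  by (simp add: koszul_def koszul_sign_def)

lemma permutes_lessThan_in: "\<sigma> permutes {..<N} \<Longrightarrow> i < N \<Longrightarrow> \<sigma> i < N"
  using permutes_in_image by fastforce

lemma koszul_sign_prod:
  "koszul_sign D \<sigma> N =
     (\<Prod>(i, j)\<in>index_pairs N. if \<sigma> j < \<sigma> i \<and> D (\<sigma> i) \<and> D (\<sigma> j) then -1 else 1)"
proof -
  let ?inv = "\<lambda>(i, j). \<sigma> j < \<sigma> i \<and> D (\<sigma> i) \<and> D (\<sigma> j)"
  have "(\<Prod>(i, j)\<in>index_pairs N. if \<sigma> j < \<sigma> i \<and> D (\<sigma> i) \<and> D (\<sigma> j) then -1 else 1)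
      = (\<Prod>x\<in>{x\<in>index_pairs N. ?inv x}. - 1 :: complex)"
    by (simp add: prod.If_cases Int_def conj_commute case_prod_beta)
  also have "{x\<in>index_pairs N. ?inv x}
      = {(i, j). i < j \<and> j < N \<and> \<sigma> j < \<sigma> i \<and> D (\<sigma> i) \<and> D (\<sigma> j)}"
    by (auto simp: index_pairs_def)
  finally show ?thesis by (simp add: koszul_sign_def)
qed

definition sort_pair :: "(nat \<Rightarrow> nat) \<Rightarrow> nat \<times> nat \<Rightarrow> nat \<times> nat" where
  "sort_pair \<tau> = (\<lambda>(i, j). (min (\<tau> i) (\<tau> j), max (\<tau> i) (\<tau> j)))"

lemma sort_pair_in_index_pairs:
  assumes "\<tau> permutes {..<N}" "x \<in> index_pairs N"
  shows "sort_pair \<tau> x \<in> index_pairs N"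
proof -
  obtain i j where ij: "x = (i, j)" "i < j" "j < N"
    using assms(2) by (auto simp: index_pairs_def)
  have "\<tau> i \<noteq> \<tau> j"
    using ij permutes_inj[OF assms(1)] by (metis injD less_irrefl)
  then show ?thesis
    using ij permutes_lessThan_in[OF assms(1)] by (auto simp: sort_pair_def index_pairs_def)
qed

lemma sort_pair_inv:
  assumes "\<tau> permutes {..<N}" "x \<in> index_pairs N"
  shows "sort_pair (inv \<tau>) (sort_pair \<tau> x) = x"
proof -
  obtain i j where ij: "x = (i, j)" "i < j"
    using assms(2) by (auto simp: index_pairs_def)
  have "\<And>y. inv \<tau> (\<tau> y) = y"
    using assms(1) permutes_inverses(2) by fastforce
  then show ?thesis
    using ij by (cases "\<tau> i < \<tau> j") (auto simp: sort_pair_def min_def max_def)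
qed

lemma bij_betw_sort_pair:
  assumes "\<tau> permutes {..<N}"
  shows "bij_betw (sort_pair \<tau>) (index_pairs N) (index_pairs N)"
proof -
  have inv: "inv \<tau> permutes {..<N}" and "inv (inv \<tau>) = \<tau>"
    using assms by (simp_all add: permutes_inv permutes_inv_inv)
  then show ?thesis
    using assms sort_pair_inv[OF inv] sort_pair_in_index_pairs[OF inv]
    by (intro bij_betw_byWitness[where f' = "sort_pair (inv \<tau>)"])
       (auto simp: sort_pair_inv sort_pair_in_index_pairs)
qed

lemma prod_index_pairs_permute:
  fixes h :: "nat \<Rightarrow> nat \<Rightarrow> complex"
  assumes "\<tau> permutes {..<N}" and "\<And>a b. h a b = h b a"
  shows "(\<Prod>(i, j)\<in>index_pairs N. h (\<tau> i) (\<tau> j)) = (\<Prod>(i, j)\<in>index_pairs N. h i j)"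
proof -
  have "(\<Prod>(i, j)\<in>index_pairs N. h (\<tau> i) (\<tau> j))
      = (\<Prod>x\<in>index_pairs N. case_prod h (sort_pair \<tau> x))"
    using assms(2) by (intro prod.cong) (auto simp: sort_pair_def min_def max_def)
  also have "\<dots> = (\<Prod>x\<in>index_pairs N. case_prod h x)"
    by (rule prod.reindex_bij_betw[OF bij_betw_sort_pair[OF assms(1)]])
  finally show ?thesis by simp
qed

text \<open>Indexing the pairs by \<open>\<tau>\<close>, a pair is an inversion of \<open>\<sigma> \<circ> \<tau>\<close> iff it
  is an inversion of exactly one of \<open>\<tau>\<close> and of \<open>\<sigma>\<close> (at its \<open>\<tau>\<close>-image).\<close>

lemma koszul_sign_comp:
  assumes \<sigma>: "\<sigma> permutes {..<N}" and \<tau>: "\<tau> permutes {..<N}"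
  shows "koszul_sign D (\<sigma> \<circ> \<tau>) N = koszul_sign D \<sigma> N * koszul_sign (D \<circ> \<sigma>) \<tau> N"
proof -
  define h where "h a b = (if ((a < b \<and> \<sigma> b < \<sigma> a) \<or> (b < a \<and> \<sigma> a < \<sigma> b))
      \<and> D (\<sigma> a) \<and> D (\<sigma> b) then -1 else (1::complex))" for a b
  have "koszul_sign D \<sigma> N = (\<Prod>(i, j)\<in>index_pairs N. h i j)"
    unfolding koszul_sign_prod by (rule prod.cong) (auto simp: index_pairs_def h_def)
  also have "\<dots> = (\<Prod>(i, j)\<in>index_pairs N. h (\<tau> i) (\<tau> j))"
    by (rule prod_index_pairs_permute[OF \<tau>, symmetric]) (auto simp: h_def)
  finally have \<sigma>_sign: "koszul_sign D \<sigma> N = (\<Prod>(i, j)\<in>index_pairs N. h (\<tau> i) (\<tau> j))" .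
  have "koszul_sign D (\<sigma> \<circ> \<tau>) N = (\<Prod>(i, j)\<in>index_pairs N. h (\<tau> i) (\<tau> j) *
      (if \<tau> j < \<tau> i \<and> D (\<sigma> (\<tau> i)) \<and> D (\<sigma> (\<tau> j)) then -1 else 1))"
    unfolding koszul_sign_prod
  proof (rule prod.cong[OF refl])
    fix x assume "x \<in> index_pairs N"
    then obtain i j where x: "x = (i, j)" "i < j" by (auto simp: index_pairs_def)
    then have "\<tau> i \<noteq> \<tau> j" "\<sigma> (\<tau> i) \<noteq> \<sigma> (\<tau> j)"
      using permutes_inj[OF \<tau>] permutes_inj[OF \<sigma>] by (metis injD less_irrefl)+
    then show "(case x of (i, j) \<Rightarrow> if (\<sigma> \<circ> \<tau>) j < (\<sigma> \<circ> \<tau>) i \<and> D ((\<sigma> \<circ> \<tau>) i)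
          \<and> D ((\<sigma> \<circ> \<tau>) j) then - 1 else 1) =
        (case x of (i, j) \<Rightarrow> h (\<tau> i) (\<tau> j) *
          (if \<tau> j < \<tau> i \<and> D (\<sigma> (\<tau> i)) \<and> D (\<sigma> (\<tau> j)) then - 1 else 1))"
      using x by (auto simp: h_def)
  qed
  also have "\<dots> = (\<Prod>(i, j)\<in>index_pairs N. h (\<tau> i) (\<tau> j)) * koszul_sign (D \<circ> \<sigma>) \<tau> N"
    unfolding koszul_sign_prod prod.distrib[symmetric] by (rule prod.cong) auto
  finally show ?thesis using \<sigma>_sign by simp
qed

lemma koszul_sign_cong:
  assumes "\<tau> permutes {..<N}" "\<And>a. a < N \<Longrightarrow> D a = D' a"
  shows "koszul_sign D \<tau> N = koszul_sign D' \<tau> N"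
proof -
  have "{(i, j). i < j \<and> j < N \<and> \<tau> j < \<tau> i \<and> D (\<tau> i) \<and> D (\<tau> j)}
     = {(i, j). i < j \<and> j < N \<and> \<tau> j < \<tau> i \<and> D' (\<tau> i) \<and> D' (\<tau> j)}"
    using assms(2) permutes_lessThan_in[OF assms(1)] by auto
  then show ?thesis by (simp add: koszul_sign_def)
qed

lemma koszul_sign_transpose:
  assumes "a < b" "b < N"
  shows "koszul_sign (\<lambda>_. True) (transpose a b) N = -1"
proof -
  have "{(i, j). i < j \<and> j < N \<and> transpose a b j < transpose a b i \<and> True \<and> True}
      = ({a} \<times> {a<..b}) \<union> ({a<..<b} \<times> {b})"
    using assms by (auto simp: transpose_def split: if_splits)
  moreover have "card (({a} \<times> {a<..b}) \<union> ({a<..<b} \<times> {b})) = (b - a) + (b - a - 1)"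
    by (subst card_Un_disjoint) (auto simp: card_cartesian_product)
  moreover have "odd ((b - a) + (b - a - 1))"
    using assms by presburger
  ultimately show ?thesis by (simp add: koszul_sign_def)
qed

lemma sign_eq_koszul_sign:
  assumes "\<sigma> permutes {..<N}"
  shows "of_int (sign \<sigma>) = koszul_sign (\<lambda>_. True) \<sigma> N"
  using assms finite_lessThan
proof (induction rule: permutes_induct)
  case id
  have no_inversions: "{(i, j). i < j \<and> j < N \<and> j < i} = {}" by auto
  show ?case by (simp add: koszul_sign_def no_inversions)
next
  case (swap a b \<pi>)
  have t: "transpose a b permutes {..<N}"
    using swap by (simp add: permutes_swap_id)
  have "koszul_sign (\<lambda>_. True) (transpose a b) N = -1"
    using swap koszul_sign_transpose[of a b N] koszul_sign_transpose[of b a N]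
    by (cases "a < b") (auto simp: transpose_commute)
  then have "koszul_sign (\<lambda>_. True) (transpose a b \<circ> \<pi>) N = - koszul_sign (\<lambda>_. True) \<pi> N"
    using koszul_sign_comp[OF t \<open>\<pi> permutes {..<N}\<close>, of "\<lambda>_. True"] by (simp add: o_def)
  moreover have "sign (transpose a b \<circ> \<pi>) = - sign \<pi>"
    using swap t by (subst sign_compose) (auto simp: permutation_permutes sign_swap_id)
  ultimately show ?case using swap by (simp del: comp_apply)
qed

lemma koszul_sign_adjacent_transpose:
  assumes "Suc j < N"
  shows "koszul_sign D (transpose j (Suc j)) N = (if D j \<and> D (Suc j) then -1 else 1)"
proof -
  have "{(i, l). i < l \<and> l < N \<and> transpose j (Suc j) l < transpose j (Suc j) i
        \<and> D (transpose j (Suc j) i) \<and> D (transpose j (Suc j) l)}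
      = (if D j \<and> D (Suc j) then {(j, Suc j)} else {})"
    using assms by (auto simp: transpose_def split: if_splits)
  then show ?thesis by (simp add: koszul_sign_def)
qed

definition shift_perm :: "nat \<Rightarrow> nat \<Rightarrow> (nat \<Rightarrow> nat) \<Rightarrow> nat \<Rightarrow> nat" where
  "shift_perm a b \<tau> = (\<lambda>i. if a \<le> i \<and> i < a + b then a + \<tau> (i - a) else i)"

lemma shift_perm_permutes:
  assumes "\<tau> permutes {..<b}"
  shows "shift_perm a b \<tau> permutes {..<a + b}"
proof -
  have inv: "inv \<tau> permutes {..<b}"
    using assms by (rule permutes_inv)
  have "\<And>x. inv \<tau> (\<tau> x) = x" "\<And>x. \<tau> (inv \<tau> x) = x"
    using assms permutes_inverses by fastforce+
  then have "bij_betw (shift_perm a b \<tau>) {..<a + b} {..<a + b}"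
    using permutes_lessThan_in[OF assms] permutes_lessThan_in[OF inv]
    by (intro bij_betw_byWitness[where f' = "shift_perm a b (inv \<tau>)"])
       (auto simp: shift_perm_def)
  then show ?thesis
    by (rule bij_imp_permutes) (auto simp: shift_perm_def)
qed

lemma koszul_sign_shift_perm:
  assumes "\<tau> permutes {..<b}"
  shows "koszul_sign D (shift_perm a b \<tau>) (a + b) = koszul_sign (\<lambda>i. D (a + i)) \<tau> b"
proof -
  let ?s = "shift_perm a b \<tau>"
  have "{(i, j). i < j \<and> j < a + b \<and> ?s j < ?s i \<and> D (?s i) \<and> D (?s j)}
     = (\<lambda>(i, j). (a + i, a + j)) `
         {(i, j). i < j \<and> j < b \<and> \<tau> j < \<tau> i \<and> D (a + \<tau> i) \<and> D (a + \<tau> j)}"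
  proof (intro set_eqI iffI)
    fix x assume "x \<in> {(i, j). i < j \<and> j < a + b \<and> ?s j < ?s i \<and> D (?s i) \<and> D (?s j)}"
    then obtain i j where ij: "x = (i, j)" "i < j" "j < a + b" "?s j < ?s i"
      "D (?s i)" "D (?s j)" by auto
    have "a \<le> i"
      using ij permutes_lessThan_in[OF assms] by (auto simp: shift_perm_def split: if_splits)
    then have "(i - a, j - a)
        \<in> {(i, j). i < j \<and> j < b \<and> \<tau> j < \<tau> i \<and> D (a + \<tau> i) \<and> D (a + \<tau> j)}"
      using ij by (auto simp: shift_perm_def)
    moreover have "x = (a + (i - a), a + (j - a))"
      using ij \<open>a \<le> i\<close> by simp
    ultimately show "x \<in> (\<lambda>(i, j). (a + i, a + j)) `
        {(i, j). i < j \<and> j < b \<and> \<tau> j < \<tau> i \<and> D (a + \<tau> i) \<and> D (a + \<tau> j)}"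
      by force
  qed (auto simp: shift_perm_def)
  moreover have "inj (\<lambda>(i::nat, j::nat). (a + i, a + j))"
    by (auto simp: inj_def)
  ultimately show ?thesis
    by (simp add: koszul_sign_def card_image inj_on_subset[of _ UNIV])
qed

section \<open>Permutations of blocks\<close>

lemma card_pairs_Cons:
  "card {(u, v). u < v \<and> v < length (x # L) \<and> R ((x # L) ! u) ((x # L) ! v)}
   = card {v. v < length L \<and> R x (L ! v)} + card {(u, v). u < v \<and> v < length L \<and> R (L ! u) (L ! v)}"
proof -
  let ?A = "{v. v < length L \<and> R x (L ! v)}"
  let ?B = "{(u, v). u < v \<and> v < length L \<and> R (L ! u) (L ! v)}"
  have "{(u, v). u < v \<and> v < length (x # L) \<and> R ((x # L) ! u) ((x # L) ! v)}
      = (\<lambda>v. (0, Suc v)) ` ?A \<union> (\<lambda>(u, v). (Suc u, Suc v)) ` ?B"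
  proof (intro set_eqI iffI)
    fix z assume "z \<in> {(u, v). u < v \<and> v < length (x # L) \<and> R ((x # L) ! u) ((x # L) ! v)}"
    then obtain u v where z: "z = (u, Suc v)" "u < Suc v" "v < length L"
        "R ((x # L) ! u) (L ! v)"
      by (auto simp: less_Suc_eq_0_disj)
    show "z \<in> (\<lambda>v. (0, Suc v)) ` ?A \<union> (\<lambda>(u, v). (Suc u, Suc v)) ` ?B"
    proof (cases u)
      case (Suc u')
      then have "(u', v) \<in> ?B" using z by auto
      then show ?thesis using z Suc by (auto simp: image_iff)
    qed (use z in auto)
  qed auto
  moreover have "finite ?B"
    by (rule finite_subset[of _ "{..<length L} \<times> {..<length L}"]) auto
  then have "card ((\<lambda>v. (0, Suc v)) ` ?A \<union> (\<lambda>(u, v). (Suc u, Suc v)) ` ?B)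
      = card ((\<lambda>v. (0::nat, Suc v)) ` ?A) + card ((\<lambda>(u, v). (Suc u, Suc v)) ` ?B)"
    by (intro card_Un_disjoint) auto
  moreover have "card ((\<lambda>v. (0::nat, Suc v)) ` ?A) = card ?A"
    "card ((\<lambda>(u, v). (Suc u, Suc v)) ` ?B) = card ?B"
    by (auto intro!: card_image simp: inj_on_def)
  ultimately show ?thesis by simp
qed

fun inversions :: "(nat \<Rightarrow> bool) \<Rightarrow> nat list \<Rightarrow> nat" where
  "inversions D [] = 0"
| "inversions D (x # L) = length (filter (\<lambda>y. y < x \<and> D x \<and> D y) L) + inversions D L"

lemma card_inversions:
  "card {(u, v). u < v \<and> v < length L \<and> L ! v < L ! u \<and> D (L ! u) \<and> D (L ! v)} = inversions D L"
proof (induction L)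
  case (Cons x L)
  then show ?case
    using card_pairs_Cons[of x L "\<lambda>a b. b < a \<and> D a \<and> D b"]
    by (simp add: length_filter_conv_card)
qed simp

lemma koszul_sign_eq_inversions: "koszul_sign D \<sigma> N = (-1) ^ inversions D (map \<sigma> [0..<N])"
proof -
  have "{(i, j). i < j \<and> j < N \<and> \<sigma> j < \<sigma> i \<and> D (\<sigma> i) \<and> D (\<sigma> j)}
    = {(u, v). u < v \<and> v < length (map \<sigma> [0..<N]) \<and> map \<sigma> [0..<N] ! v < map \<sigma> [0..<N] ! u
        \<and> D (map \<sigma> [0..<N] ! u) \<and> D (map \<sigma> [0..<N] ! v)}"
    by auto
  then show ?thesis
    by (simp only: koszul_sign_def card_inversions)
qed

definition cross_inversions :: "(nat \<Rightarrow> bool) \<Rightarrow> nat list \<Rightarrow> nat list \<Rightarrow> nat" where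
  "cross_inversions D A B = sum_list (map (\<lambda>x. length (filter (\<lambda>y. y < x \<and> D x \<and> D y) B)) A)"

lemma inversions_append:
  "inversions D (A @ B) = inversions D A + inversions D B + cross_inversions D A B"
  by (induction A) (auto simp: cross_inversions_def)

lemma cross_inversions_append:
  "cross_inversions D A (B @ C) = cross_inversions D A B + cross_inversions D A C"
  by (induction A) (auto simp: cross_inversions_def)

lemma cross_inversions_greater:
  assumes "\<And>x y. x \<in> set A \<Longrightarrow> y \<in> set B \<Longrightarrow> y < x"
  shows "cross_inversions D A B = length (filter D A) * length (filter D B)"
  using assms
proof (induction A)
  case (Cons a A)
  have "filter (\<lambda>y. y < a \<and> D a \<and> D y) B = (if D a then filter D B else [])"
    using Cons.prems by (auto intro: filter_cong)
  then show ?case using Cons by (simp add: cross_inversions_def)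
qed (simp add: cross_inversions_def)

lemma cross_inversions_less:
  assumes "\<And>x y. x \<in> set A \<Longrightarrow> y \<in> set B \<Longrightarrow> x < y"
  shows "cross_inversions D A B = 0"
  using assms by (fastforce simp: cross_inversions_def filter_empty_conv dest: less_asym)

fun block :: "nat \<Rightarrow> nat list" where
  "block 0 = [0]"
| "block (Suc i) = [2 * i + 1, 2 * i + 2]"

lemma block_less: "b < a \<Longrightarrow> x \<in> set (block a) \<Longrightarrow> y \<in> set (block b) \<Longrightarrow> y < x"
  by (cases a; cases b) auto

lemma inversions_block [simp]: "inversions D (block a) = 0"
  by (cases a) auto

lemma length_block: "length (block a) = (if a = 0 then 1 else 2)"
  by (cases a) auto

definition odd_block :: "(nat \<Rightarrow> bool) \<Rightarrow> nat \<Rightarrow> bool" where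
  "odd_block D a \<longleftrightarrow> odd (length (filter D (block a)))"

lemma cross_inversions_block_mod2:
  assumes "a \<noteq> b"
  shows "cross_inversions D (block a) (block b) mod 2
    = (if b < a \<and> odd_block D a \<and> odd_block D b then 1 else 0)"
proof (cases "b < a")
  case True
  then show ?thesis
    using cross_inversions_greater[OF block_less[OF True], where D = D]
    by (auto simp: odd_block_def mod2_eq_if)
next
  case False
  with assms have "a < b" by simp
  then have "cross_inversions D (block a) (block b) = 0"
    by (intro cross_inversions_less) (metis block_less)
  with False show ?thesis by (simp only: if_False simp_thms mod_0)
qed

lemma cross_inversions_block_concat_mod2:
  assumes "a \<notin> set L"
  shows "cross_inversions D (block a) (concat (map block L)) mod 2
    = length (filter (\<lambda>b. b < a \<and> odd_block D a \<and> odd_block D b) L) mod 2"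
  using assms
proof (induction L)
  case (Cons b L)
  have "cross_inversions D (block a) (block b) mod 2
      = (if b < a \<and> odd_block D a \<and> odd_block D b then 1 else 0) mod 2"
    using Cons.prems cross_inversions_block_mod2[of a b D] by simp
  then have "(cross_inversions D (block a) (block b)
        + cross_inversions D (block a) (concat (map block L))) mod 2
      = ((if b < a \<and> odd_block D a \<and> odd_block D b then 1 else 0)
        + length (filter (\<lambda>b. b < a \<and> odd_block D a \<and> odd_block D b) L)) mod 2"
    using Cons by (intro mod_add_cong) auto
  then show ?case by (simp add: cross_inversions_append)
qed (simp add: cross_inversions_def)

text \<open>Swapping two blocks creates as many inversions as the product of their numbers
  of marked entries.\<close>

lemma inversions_concat_blocks_mod2:
  assumes "distinct L"
  shows "inversions D (concat (map block L)) mod 2 = inversions (odd_block D) L mod 2"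
  using assms
proof (induction L)
  case (Cons a L)
  have "inversions D (concat (map block (a # L)))
      = inversions D (concat (map block L)) + cross_inversions D (block a) (concat (map block L))"
    by (simp add: inversions_append)
  also have "\<dots> mod 2 = (inversions (odd_block D) L
      + length (filter (\<lambda>b. b < a \<and> odd_block D a \<and> odd_block D b) L)) mod 2"
    using Cons cross_inversions_block_concat_mod2[of a L D] by (intro mod_add_cong) auto
  finally show ?case by (simp add: add.commute)
qed simp

definition block_list :: "nat \<Rightarrow> (nat \<Rightarrow> nat) \<Rightarrow> nat list" where
  "block_list k \<pi> = concat (map (\<lambda>I. block (\<pi> I)) [0..<k])"

lemma length_block_list:
  assumes "\<pi> permutes {..<Suc m}"
  shows "length (block_list (Suc m) \<pi>) = Suc (2 * m)"
proof -
  have "length (block_list (Suc m) \<pi>) = (\<Sum>I<Suc m. length (block (\<pi> I)))"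
    by (simp add: block_list_def length_concat sum_list_sum_nth atLeast0LessThan)
  also have "\<dots> = (\<Sum>I<Suc m. length (block I))"
    using sum.permute[OF assms, of "\<lambda>I. length (block I)"] by (simp add: o_def)
  also have "\<dots> = Suc (2 * m)"
    by (induction m) (auto simp: length_block)
  finally show ?thesis .
qed

lemma Union_blocks: "(\<Union>I<Suc m. set (block I)) = {..<Suc (2 * m)}"
proof (intro equalityI subsetI)
  fix x assume x: "x \<in> {..<Suc (2 * m)}"
  show "x \<in> (\<Union>I<Suc m. set (block I))"
  proof (cases x)
    case (Suc y)
    then have "x = 2 * (y div 2) + 1 \<or> x = 2 * (y div 2) + 2" "y div 2 < m"
      using x by auto
    then show ?thesis
      by (intro UN_I[of "Suc (y div 2)"]) auto
  qed (auto intro: bexI[of _ 0])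
next
  fix x assume "x \<in> (\<Union>I<Suc m. set (block I))"
  then obtain I where "I < Suc m" "x \<in> set (block I)" by blast
  then show "x \<in> {..<Suc (2 * m)}" by (cases I) auto
qed

lemma set_block_list:
  assumes "\<pi> permutes {..<Suc m}"
  shows "set (block_list (Suc m) \<pi>) = {..<Suc (2 * m)}"
proof -
  have "set (block_list (Suc m) \<pi>) = (\<Union>J\<in>\<pi> ` {..<Suc m}. set (block J))"
    by (auto simp: block_list_def atLeast0LessThan simp del: upt_Suc)
  then show ?thesis
    using permutes_image[OF assms] Union_blocks by simp
qed

definition block_perm :: "nat \<Rightarrow> (nat \<Rightarrow> nat) \<Rightarrow> nat \<Rightarrow> nat" where
  "block_perm m \<pi> = (\<lambda>e. if e < Suc (2 * m) then block_list (Suc m) \<pi> ! e else e)"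

lemma block_perm_permutes:
  assumes "\<pi> permutes {..<Suc m}"
  shows "block_perm m \<pi> permutes {..<Suc (2 * m)}"
proof -
  have "distinct (block_list (Suc m) \<pi>)"
    by (rule card_distinct) (simp add: set_block_list[OF assms] length_block_list[OF assms])
  then have "bij_betw ((!) (block_list (Suc m) \<pi>)) {..<Suc (2 * m)} {..<Suc (2 * m)}"
    using bij_betw_nth[of "block_list (Suc m) \<pi>"]
    by (simp add: length_block_list[OF assms] set_block_list[OF assms] lessThan_atLeast0)
  then have "bij_betw (block_perm m \<pi>) {..<Suc (2 * m)} {..<Suc (2 * m)}"
    by (rule bij_betw_cong[THEN iffD1, rotated]) (simp add: block_perm_def)
  then show ?thesis
    by (rule bij_imp_permutes) (simp add: block_perm_def)
qed

lemma map_block_perm: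
  assumes "\<pi> permutes {..<Suc m}"
  shows "map (block_perm m \<pi>) [0..<Suc (2 * m)] = block_list (Suc m) \<pi>"
  by (rule nth_equalityI) (auto simp: length_block_list[OF assms] block_perm_def simp del: upt_Suc)

lemma permute_block_perm:
  assumes "\<pi> permutes {..<Suc m}"
  shows "permute (Suc (2 * m)) (block_perm m \<pi>) Ys = concat (map (\<lambda>I. map ((!) Ys) (block (\<pi> I))) [0..<Suc m])"
proof -
  have "permute (Suc (2 * m)) (block_perm m \<pi>) Ys = map ((!) Ys) (map (block_perm m \<pi>) [0..<Suc (2 * m)])"
    by (simp add: permute_def del: upt_Suc)
  then show ?thesis
    by (simp add: map_block_perm[OF assms] block_list_def map_concat o_def del: upt_Suc)
qed

lemma koszul_sign_block_perm:
  assumes "\<pi> permutes {..<Suc m}"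
  shows "koszul_sign D (block_perm m \<pi>) (Suc (2 * m)) = koszul_sign (odd_block D) \<pi> (Suc m)"
proof -
  have "distinct (map \<pi> [0..<Suc m])"
    using permutes_inj[OF assms] by (simp add: distinct_map inj_on_subset[of _ UNIV] del: upt_Suc)
  moreover have "block_list (Suc m) \<pi> = concat (map block (map \<pi> [0..<Suc m]))"
    by (simp only: block_list_def map_map comp_def)
  ultimately have "inversions D (block_list (Suc m) \<pi>) mod 2
      = inversions (odd_block D) (map \<pi> [0..<Suc m]) mod 2"
    by (simp only: inversions_concat_blocks_mod2)
  then have parity: "even (inversions D (block_list (Suc m) \<pi>))
      \<longleftrightarrow> even (inversions (odd_block D) (map \<pi> [0..<Suc m]))"
    by (simp only: even_iff_mod_2_eq_zero)
  show ?thesis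
    by (simp only: koszul_sign_eq_inversions map_block_perm[OF assms] minus_one_power_iff parity)
qed

text \<open>Only block \<open>0\<close> has odd length, so moving blocks is an even permutation.\<close>

lemma sign_block_perm:
  assumes "\<pi> permutes {..<Suc m}"
  shows "sign (block_perm m \<pi>) = 1"
proof -
  have odd_blocks: "odd_block (\<lambda>_. True) = (\<lambda>I. I = 0)"
    by (auto simp: odd_block_def length_block fun_eq_iff)
  have no_inversions: "{(i, j). i < j \<and> j < Suc m \<and> \<pi> j < \<pi> i \<and> \<pi> i = 0 \<and> \<pi> j = 0} = {}"
    by auto
  have "koszul_sign (odd_block (\<lambda>_. True)) \<pi> (Suc m) = 1"
    unfolding odd_blocks koszul_sign_def no_inversions by simp
  then have "koszul_sign (\<lambda>_. True) (block_perm m \<pi>) (Suc (2 * m)) = 1"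
    by (simp only: koszul_sign_block_perm[OF assms])
  then show ?thesis
    using sign_eq_koszul_sign[OF block_perm_permutes[OF assms]] by simp
qed

section \<open>The super antisymmetrizer\<close>

definition alt_sign :: "nat \<Rightarrow> nat \<Rightarrow> (nat \<Rightarrow> nat) \<Rightarrow> smat list \<Rightarrow> complex" where
  "alt_sign p N \<sigma> Xs = of_int (sign \<sigma>) * koszul p N \<sigma> Xs"

lemma altz_alt_sign:
  "altz p N F Xs = (\<Sum>\<sigma>\<in>{\<sigma>. \<sigma> permutes {..<N}}. alt_sign p N \<sigma> Xs * F (permute N \<sigma> Xs))"
  by (simp add: altz_def alt_sign_def)

lemma length_permute [simp]: "length (permute N \<sigma> Xs) = N"
  by (simp add: permute_def)

lemma nth_permute [simp]: "i < N \<Longrightarrow> permute N \<sigma> Xs ! i = Xs ! \<sigma> i"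
  by (simp add: permute_def)

lemma permute_comp:
  assumes "\<tau> permutes {..<N}"
  shows "permute N (\<sigma> \<circ> \<tau>) Xs = permute N \<tau> (permute N \<sigma> Xs)"
  by (rule nth_equalityI) (auto simp: permutes_lessThan_in[OF assms])

lemma set_permute_subset:
  assumes "\<sigma> permutes {..<N}" "length Xs = N"
  shows "set (permute N \<sigma> Xs) \<subseteq> set Xs"
  using assms permutes_lessThan_in[OF assms(1)] by (auto simp: permute_def)

lemma permute_Suc_eq_Cons:
  assumes "\<sigma> permutes {..<Suc n}" "length Xs = Suc n"
  obtains Y Zs where "permute (Suc n) \<sigma> Xs = Y # Zs" "length Zs = n" "set (Y # Zs) \<subseteq> set Xs"
proof -
  obtain Y Zs where "permute (Suc n) \<sigma> Xs = Y # Zs"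
    by (metis length_permute length_Suc_conv)
  moreover from this have "length Zs = n"
    by (metis length_permute length_Cons Suc_inject)
  ultimately show thesis
    using that set_permute_subset[OF assms] by simp
qed

lemma parsum_sum: "parsum p Xs = (\<Sum>i<length Xs. par p (Xs ! i))"
  by (simp add: parsum_def sum_list_sum_nth atLeast0LessThan)

lemma parsum_permute:
  assumes "\<sigma> permutes {..<length Xs}"
  shows "parsum p (permute (length Xs) \<sigma> Xs) = parsum p Xs"
  using sum.permute[OF assms, of "\<lambda>i. par p (Xs ! i)"] by (simp add: parsum_sum o_def)

lemma alt_sign_comp:
  assumes \<sigma>: "\<sigma> permutes {..<N}" and \<rho>: "\<rho> permutes {..<N}"
  shows "alt_sign p N (\<sigma> \<circ> \<rho>) Xs = alt_sign p N \<sigma> Xs * alt_sign p N \<rho> (permute N \<sigma> Xs)"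
proof -
  have "sign (\<sigma> \<circ> \<rho>) = sign \<sigma> * sign \<rho>"
    by (rule sign_compose) (use \<sigma> \<rho> in \<open>auto simp: permutation_permutes\<close>)
  moreover have "koszul_sign ((\<lambda>a. par p (Xs ! a) = 1) \<circ> \<sigma>) \<rho> N
      = koszul_sign (\<lambda>a. par p (permute N \<sigma> Xs ! a) = 1) \<rho> N"
    by (rule koszul_sign_cong[OF \<rho>]) simp
  ultimately show ?thesis
    by (simp add: alt_sign_def koszul_eq_koszul_sign koszul_sign_comp[OF \<sigma> \<rho>])
qed

lemma altz_cong:
  assumes "\<And>\<sigma>. \<sigma> permutes {..<N} \<Longrightarrow> F (permute N \<sigma> Xs) = G (permute N \<sigma> Xs)"
  shows "altz p N F Xs = altz p N G Xs"
  unfolding altz_alt_sign by (rule sum.cong) (auto simp: assms)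

lemma altz_sum:
  "altz p N (\<lambda>Ys. \<Sum>a\<in>A. c a * G a Ys) Xs = (\<Sum>a\<in>A. c a * altz p N (G a) Xs)"
  unfolding altz_alt_sign by (simp add: sum_distrib_left mult_ac sum.swap[of _ A])

lemma altz_add:
  "altz p N (\<lambda>Ys. F Ys + G Ys) Xs = altz p N F Xs + altz p N G Xs"
  unfolding altz_alt_sign by (simp add: sum.distrib distrib_left)

lemma altz_cmult:
  "altz p N (\<lambda>Ys. c * F Ys) Xs = c * altz p N F Xs"
  unfolding altz_alt_sign by (simp add: sum_distrib_left mult_ac)

lemma altz_nonzero:
  assumes "altz p N F Xs \<noteq> 0"
  obtains \<sigma> where "\<sigma> permutes {..<N}" "F (permute N \<sigma> Xs) \<noteq> 0"
  using assms unfolding altz_alt_sign by (metis (mono_tags, lifting) mem_Collect_eq mult_zero_right sum.neutral)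

lemma altz_reindex:
  assumes \<rho>: "\<rho> permutes {..<N}"
  shows "altz p N (\<lambda>Ys. alt_sign p N \<rho> Ys * F (permute N \<rho> Ys)) Xs = altz p N F Xs"
proof -
  have "altz p N F Xs = (\<Sum>\<sigma>\<in>{\<sigma>. \<sigma> permutes {..<N}}.
      alt_sign p N (\<sigma> \<circ> \<rho>) Xs * F (permute N (\<sigma> \<circ> \<rho>) Xs))"
    unfolding altz_alt_sign by (rule sum_permutations_compose_right[OF \<rho>])
  also have "\<dots> = altz p N (\<lambda>Ys. alt_sign p N \<rho> Ys * F (permute N \<rho> Ys)) Xs"
    unfolding altz_alt_sign
    by (rule sum.cong) (auto simp: alt_sign_comp[OF _ \<rho>] permute_comp[OF \<rho>])
  finally show ?thesis by simp
qed

lemma alt_sign_shift_perm: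
  assumes \<tau>: "\<tau> permutes {..<b}" and "length Us = a + b"
  shows "alt_sign p (a + b) (shift_perm a b \<tau>) Us = alt_sign p b \<tau> (drop a Us)"
proof -
  have "(of_int (sign (shift_perm a b \<tau>)) :: complex) = of_int (sign \<tau>)"
    using koszul_sign_shift_perm[OF \<tau>, of "\<lambda>_. True" a]
    by (simp add: sign_eq_koszul_sign[OF shift_perm_permutes[OF \<tau>]] sign_eq_koszul_sign[OF \<tau>])
  moreover have "koszul_sign (\<lambda>i. par p (Us ! (a + i)) = 1) \<tau> b
      = koszul_sign (\<lambda>i. par p (drop a Us ! i) = 1) \<tau> b"
    by (rule koszul_sign_cong[OF \<tau>]) (use assms(2) in simp)
  ultimately show ?thesis
    by (simp add: alt_sign_def koszul_eq_koszul_sign koszul_sign_shift_perm[OF \<tau>])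
qed

lemma permute_shift_perm:
  assumes \<tau>: "\<tau> permutes {..<b}" and "length Us = a + b"
  shows "permute (a + b) (shift_perm a b \<tau>) Us = take a Us @ permute b \<tau> (drop a Us)"
proof (rule nth_equalityI)
  fix i assume "i < length (permute (a + b) (shift_perm a b \<tau>) Us)"
  then show "permute (a + b) (shift_perm a b \<tau>) Us ! i = (take a Us @ permute b \<tau> (drop a Us)) ! i"
    using assms permutes_lessThan_in[OF \<tau>, of "i - a"]
    by (cases "i < a") (auto simp: shift_perm_def nth_append)
qed (use assms in simp)

text \<open>Each inner permutation, extended by the identity on the first \<open>a\<close> slots, is
  absorbed by \<open>altz_reindex\<close>.\<close>

lemma altz_altz_drop:
  assumes "length Xs = a + b"
  shows "altz p (a + b) (\<lambda>Ys. altz p b (\<lambda>Zs. F (take a Ys @ Zs)) (drop a Ys)) Xs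
    = fact b * altz p (a + b) F Xs"
proof -
  have "altz p (a + b) (\<lambda>Ys. altz p b (\<lambda>Zs. F (take a Ys @ Zs)) (drop a Ys)) Xs
      = altz p (a + b) (\<lambda>Ys. \<Sum>\<tau>\<in>{\<tau>. \<tau> permutes {..<b}}. 1 *
          (alt_sign p (a + b) (shift_perm a b \<tau>) Ys * F (permute (a + b) (shift_perm a b \<tau>) Ys))) Xs"
    using assms
    by (intro altz_cong) (simp add: altz_alt_sign alt_sign_shift_perm permute_shift_perm)
  also have "\<dots> = (\<Sum>\<tau>\<in>{\<tau>. \<tau> permutes {..<b}}. 1 * altz p (a + b) F Xs)"
    unfolding altz_sum by (intro sum.cong refl) (simp add: altz_reindex shift_perm_permutes)
  also have "\<dots> = fact b * altz p (a + b) F Xs"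
    by (simp add: card_permutations)
  finally show ?thesis .
qed

lemma altz_altz_tl:
  assumes "length Xs = Suc b"
  shows "altz p (Suc b) (\<lambda>Ys. altz p b (\<lambda>Zs. F (hd Ys # Zs)) (tl Ys)) Xs
    = fact b * altz p (Suc b) F Xs"
proof -
  have "altz p (Suc b) (\<lambda>Ys. altz p b (\<lambda>Zs. F (hd Ys # Zs)) (tl Ys)) Xs
      = altz p (Suc b) (\<lambda>Ys. altz p b (\<lambda>Zs. F (take 1 Ys @ Zs)) (drop 1 Ys)) Xs"
  proof (rule altz_cong)
    fix \<sigma> assume "\<sigma> permutes {..<Suc b}"
    then obtain Y Ys where "permute (Suc b) \<sigma> Xs = Y # Ys"
      using assms by (rule permute_Suc_eq_Cons)
    then show "altz p b (\<lambda>Zs. F (hd (permute (Suc b) \<sigma> Xs) # Zs)) (tl (permute (Suc b) \<sigma> Xs))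
        = altz p b (\<lambda>Zs. F (take 1 (permute (Suc b) \<sigma> Xs) @ Zs)) (drop 1 (permute (Suc b) \<sigma> Xs))"
      by simp
  qed
  then show ?thesis
    using altz_altz_drop[of Xs 1 b p F] assms by simp
qed

section \<open>Homogeneous matrices in \<open>gl(p,q)\<close>\<close>

definition homogeneous :: "nat \<Rightarrow> smat \<Rightarrow> nat \<Rightarrow> bool" where
  "homogeneous p A d \<longleftrightarrow> (\<forall>i j. A i j \<noteq> 0 \<longrightarrow> (odd_idx p i \<noteq> odd_idx p j \<longleftrightarrow> odd d))"

lemma par_cases: "par p A = 0 \<or> par p A = 1"
  by (simp add: par_def)

lemma homog_gl: "homog p q A \<Longrightarrow> A \<in> gl p q"
  by (auto simp: homog_def even_elt_def odd_elt_def)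

lemma homogeneous_par: "homog p q A \<Longrightarrow> homogeneous p A (par p A)"
  by (auto simp: homog_def even_elt_def odd_elt_def homogeneous_def par_def)

lemma homog_of_homogeneous: "A \<in> gl p q \<Longrightarrow> homogeneous p A d \<Longrightarrow> homog p q A"
  unfolding homog_def even_elt_def odd_elt_def homogeneous_def by auto

lemma par_of_homogeneous:
  assumes "homogeneous p A d" "A i j \<noteq> 0"
  shows "par p A = d mod 2"
proof (cases "odd d")
  case True
  then show ?thesis
    using assms by (auto simp: homogeneous_def par_def odd_iff_mod_2_eq_one)
next
  case False
  then have "\<forall>i j. A i j \<noteq> 0 \<longrightarrow> odd_idx p i = odd_idx p j"
    using assms(1) by (auto simp: homogeneous_def)
  then show ?thesis
    using False by (simp add: par_def even_iff_mod_2_eq_zero)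
qed

lemma par_eq_if_bodd:
  assumes "homog p q A" "A a b \<noteq> 0"
  shows "par p A = (if bodd p (a, b) then 1 else 0)"
  using assms homogeneous_par[OF assms(1)] par_cases[of p A]
  by (auto simp: homogeneous_def bodd_def)

lemma homogeneous_mmult:
  assumes "homogeneous p A a" "homogeneous p B b"
  shows "homogeneous p (mmult n A B) (a + b)"
  unfolding homogeneous_def
proof (intro allI impI)
  fix i j assume "mmult n A B i j \<noteq> 0"
  then obtain l where "A i l \<noteq> 0" "B l j \<noteq> 0"
    by (metis (no_types, lifting) mmult_def mult_not_zero sum.neutral)
  then show "odd_idx p i \<noteq> odd_idx p j \<longleftrightarrow> odd (a + b)"
    using assms by (fastforce simp: homogeneous_def)
qed

lemma mprod_Cons: "mprod n (A # As) = mmult n A (mprod n As)"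
  by (simp add: mprod_def)

lemma homogeneous_mprod:
  assumes "\<And>i. i < length As \<Longrightarrow> homogeneous p (As ! i) (d i)"
  shows "homogeneous p (mprod n As) (\<Sum>i<length As. d i)"
  using assms
proof (induction As arbitrary: d)
  case Nil
  then show ?case by (simp add: mprod_def homogeneous_def mone_def)
next
  case (Cons A As)
  have "homogeneous p (mprod n As) (\<Sum>i<length As. d (Suc i))"
    by (intro Cons.IH) (metis Cons.prems Suc_less_eq length_Cons nth_Cons_Suc)
  then have "homogeneous p (mmult n A (mprod n As)) (d 0 + (\<Sum>i<length As. d (Suc i)))"
    using Cons.prems[of 0] by (intro homogeneous_mmult) auto
  then show ?case
    by (simp only: mprod_Cons length_Cons sum.lessThan_Suc_shift)
qed

lemma str_homogeneous_odd: "homogeneous p M d \<Longrightarrow> odd d \<Longrightarrow> str p q M = 0"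
  unfolding str_def homogeneous_def by (metis (no_types, lifting) sum.neutral diff_zero)

lemma homogeneous_sbracket:
  assumes "homogeneous p A a" "homogeneous p B b"
  shows "homogeneous p (sbracket p q A B) (a + b)"
  using homogeneous_mmult[OF assms, of "p + q"] homogeneous_mmult[OF assms(2,1), of "p + q"]
  unfolding homogeneous_def sbracket_def by (metis add.commute diff_zero mult_zero_right)

lemma homogeneous_sbracket_par:
  "homog p q A \<Longrightarrow> homog p q B \<Longrightarrow> homogeneous p (sbracket p q A B) (par p A + par p B)"
  by (intro homogeneous_sbracket homogeneous_par)

lemma gl_mmult: "A \<in> gl p q \<Longrightarrow> B \<in> gl p q \<Longrightarrow> mmult (p + q) A B \<in> gl p q"
  unfolding gl_def mmult_def
  by (auto intro: sum.neutral) (metis (mono_tags, lifting) mult_not_zero sum.neutral)+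

lemma gl_sbracket: "A \<in> gl p q \<Longrightarrow> B \<in> gl p q \<Longrightarrow> sbracket p q A B \<in> gl p q"
  using gl_mmult[of A p q B] gl_mmult[of B p q A] unfolding gl_def sbracket_def
  by (smt (verit) diff_zero mem_Collect_eq mult_zero_right)

lemma homog_sbracket: "homog p q A \<Longrightarrow> homog p q B \<Longrightarrow> homog p q (sbracket p q A B)"
  by (meson gl_sbracket homog_gl homogeneous_sbracket_par homog_of_homogeneous)

lemma homogeneous_elem: "homogeneous p (elem a b) (if bodd p (a, b) then 1 else 0)"
  by (auto simp: homogeneous_def elem_def bodd_def)

lemma homog_elem: "(a, b) \<in> basis_idx p q \<Longrightarrow> homog p q (elem a b)"
  by (rule homog_of_homogeneous[OF _ homogeneous_elem]) (auto simp: gl_def elem_def basis_idx_def)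

lemma par_elem: "par p (elem a b) = (if bodd p (a, b) then 1 else 0)"
  by (auto simp: par_def elem_def bodd_def)

lemma finite_basis_idx [simp]: "finite (basis_idx p q)"
  by (simp add: basis_idx_def)

lemma gl_eq_sum_elem:
  assumes "V \<in> gl p q"
  shows "V = (\<lambda>i j. \<Sum>ab\<in>basis_idx p q. V (fst ab) (snd ab) * elem (fst ab) (snd ab) i j)"
proof (intro ext)
  fix i j
  show "V i j = (\<Sum>ab\<in>basis_idx p q. V (fst ab) (snd ab) * elem (fst ab) (snd ab) i j)"
  proof (cases "(i, j) \<in> basis_idx p q")
    case True
    then have "(\<Sum>ab\<in>basis_idx p q. V (fst ab) (snd ab) * elem (fst ab) (snd ab) i j)
        = (\<Sum>ab\<in>{(i, j)}. V (fst ab) (snd ab) * elem (fst ab) (snd ab) i j)"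
      by (intro sum.mono_neutral_right) (auto simp: elem_def)
    then show ?thesis by (simp add: elem_def)
  next
    case False
    then have "V i j = 0"
      using assms by (auto simp: gl_def basis_idx_def)
    moreover have "\<And>ab. ab \<in> basis_idx p q \<Longrightarrow> elem (fst ab) (snd ab) i j = 0"
      using False by (auto simp: elem_def)
    ultimately show ?thesis by simp
  qed
qed

lemma mmult_sum_left:
  "mmult n (\<lambda>i j. \<Sum>a\<in>A. f a * M a i j) B = (\<lambda>i j. \<Sum>a\<in>A. f a * mmult n (M a) B i j)"
  unfolding mmult_def fun_eq_iff
  by (auto simp: sum_distrib_left sum_distrib_right mult.assoc intro: sum.swap)

lemma mmult_sum_right:
  "mmult n B (\<lambda>i j. \<Sum>a\<in>A. f a * M a i j) = (\<lambda>i j. \<Sum>a\<in>A. f a * mmult n B (M a) i j)"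
  unfolding mmult_def fun_eq_iff
  by (auto simp: sum_distrib_left sum_distrib_right mult.left_commute intro: sum.swap)

lemma mprod_list_update_sum:
  "r < length As \<Longrightarrow> mprod n (As[r := (\<lambda>i j. \<Sum>a\<in>A. f a * M a i j)])
     = (\<lambda>i j. \<Sum>a\<in>A. f a * mprod n (As[r := M a]) i j)"
proof (induction As arbitrary: r)
  case (Cons B As)
  then show ?case
    by (cases r) (simp_all add: mprod_Cons mmult_sum_left mmult_sum_right)
qed simp

lemma mprod_zero: "(\<lambda>i j. 0) \<in> set As \<Longrightarrow> mprod n As = (\<lambda>i j. 0)"
  by (induction As) (auto simp: mprod_Cons mmult_def)

lemma mmult_assoc: "mmult n (mmult n A B) C = mmult n A (mmult n B C)"
  unfolding mmult_def fun_eq_iff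
  by (auto simp: sum_distrib_left sum_distrib_right mult.assoc intro: sum.swap)

lemma mmult_mone_left:
  assumes "A \<in> gl p q"
  shows "mmult (p + q) (mone (p + q)) A = A"
proof (intro ext)
  fix i j
  show "mmult (p + q) (mone (p + q)) A i j = A i j"
  proof (cases "i < p + q")
    case True
    then have "(\<Sum>l<p + q. mone (p + q) i l * A l j) = (\<Sum>l\<in>{i}. mone (p + q) i l * A l j)"
      by (intro sum.mono_neutral_right) (auto simp: mone_def)
    then show ?thesis by (simp add: mmult_def mone_def True)
  next
    case False
    moreover have "A i j = 0"
      using assms False unfolding gl_def by blast
    ultimately show ?thesis by (simp add: mmult_def mone_def)
  qed
qed

lemma mmult_mone_right:
  assumes "A \<in> gl p q"
  shows "mmult (p + q) A (mone (p + q)) = A"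
proof (intro ext)
  fix i j
  show "mmult (p + q) A (mone (p + q)) i j = A i j"
  proof (cases "j < p + q")
    case True
    then have "(\<Sum>l<p + q. A i l * mone (p + q) l j) = (\<Sum>l\<in>{j}. A i l * mone (p + q) l j)"
      by (intro sum.mono_neutral_right) (auto simp: mone_def)
    then show ?thesis by (simp add: mmult_def mone_def True)
  next
    case False
    moreover have "A i j = 0"
      using assms False unfolding gl_def by blast
    ultimately show ?thesis by (simp add: mmult_def mone_def)
  qed
qed

lemma mprod_gl: "set As \<subseteq> gl p q \<Longrightarrow> mprod (p + q) As \<in> gl p q"
  by (induction As) (auto simp: mprod_Cons gl_mmult, simp add: mprod_def mone_def gl_def)

lemma mprod_append:
  "set Bs \<subseteq> gl p q \<Longrightarrow>
    mprod (p + q) (As @ Bs) = mmult (p + q) (mprod (p + q) As) (mprod (p + q) Bs)"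
  by (induction As) (simp_all add: mprod_Cons mmult_assoc mmult_mone_left mprod_gl
      mprod_def[of _ "[]"])

lemma mprod_concat:
  "set (concat Ass) \<subseteq> gl p q \<Longrightarrow>
    mprod (p + q) (concat Ass) = mprod (p + q) (map (mprod (p + q)) Ass)"
  by (induction Ass) (simp_all add: mprod_append mprod_Cons)

lemma str_sum: "str p q (\<lambda>i j. \<Sum>a\<in>A. f a * M a i j) = (\<Sum>a\<in>A. f a * str p q (M a))"
  unfolding str_def
  by (simp add: sum_distrib_left right_diff_distrib sum_subtractf sum.swap[of _ A])

section \<open>The invariant polynomial \<open>P\<^sub>k\<close>\<close>

text \<open>\<open>P\<^sub>k\<close> with the Koszul signs computed from an arbitrary marking \<open>D\<close> of the
  odd slots; this decouples the signs from the arguments, which is needed when an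
  argument is replaced by a sum of elements of possibly different parity.\<close>

definition Psym :: "nat \<Rightarrow> nat \<Rightarrow> (nat \<Rightarrow> bool) \<Rightarrow> smat list \<Rightarrow> complex" where
  "Psym p q D Ws = str p q (\<lambda>i j. \<Sum>\<pi>\<in>{\<pi>. \<pi> permutes {..<length Ws}}.
      koszul_sign D \<pi> (length Ws) * mprod (p + q) (permute (length Ws) \<pi> Ws) i j)"

lemma Pk_eq_Psym: "length Ws = k \<Longrightarrow> Pk p q k Ws = Psym p q (\<lambda>a. par p (Ws ! a) = 1) Ws"
  by (simp add: Pk_def Psym_def koszul_eq_koszul_sign)

lemma Psym_eq_sum:
  "Psym p q D Ws = (\<Sum>\<pi>\<in>{\<pi>. \<pi> permutes {..<length Ws}}.
      koszul_sign D \<pi> (length Ws) * str p q (mprod (p + q) (permute (length Ws) \<pi> Ws)))"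
  unfolding Psym_def by (rule str_sum)

lemma Lamk_eq_altz: "Lamk p q N Xs = altz p N (\<lambda>Zs. str p q (mprod (p + q) Zs)) Xs"
proof -
  have "Lamk p q N Xs = (\<Sum>\<sigma>\<in>{\<sigma>. \<sigma> permutes {..<N}}. (of_int (sign \<sigma>) * koszul p N \<sigma> Xs) *
      str p q (mprod (p + q) (permute N \<sigma> Xs)))"
    unfolding Lamk_def by (rule str_sum)
  then show ?thesis by (simp add: altz_def)
qed

lemma permute_list_update:
  assumes "\<pi> permutes {..<length Ws}" "r < length Ws"
  shows "permute (length Ws) \<pi> (Ws[r := V]) = (permute (length Ws) \<pi> Ws)[inv \<pi> r := V]"
proof (rule nth_equalityI)
  fix i assume "i < length (permute (length Ws) \<pi> (Ws[r := V]))"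
  moreover have "\<pi> i = r \<longleftrightarrow> i = inv \<pi> r"
    using assms(1) by (metis permutes_inverses(1) permutes_inverses(2))
  ultimately show "permute (length Ws) \<pi> (Ws[r := V]) ! i = (permute (length Ws) \<pi> Ws)[inv \<pi> r := V] ! i"
    using permutes_lessThan_in[OF assms(1)] by (auto simp: nth_list_update)
qed simp

lemma inv_permutes_lessThan_in: "\<pi> permutes {..<N} \<Longrightarrow> r < N \<Longrightarrow> inv \<pi> r < N"
  using permutes_lessThan_in permutes_inv by blast

lemma Psym_list_update_sum:
  assumes "r < length Ws"
  shows "Psym p q D (Ws[r := (\<lambda>i j. \<Sum>a\<in>A. f a * M a i j)])
    = (\<Sum>a\<in>A. f a * Psym p q D (Ws[r := M a]))"
proof -
  have "str p q (mprod (p + q) (permute (length Ws) \<pi> (Ws[r := (\<lambda>i j. \<Sum>a\<in>A. f a * M a i j)])))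
      = (\<Sum>a\<in>A. f a * str p q (mprod (p + q) (permute (length Ws) \<pi> (Ws[r := M a]))))"
    if \<pi>: "\<pi> permutes {..<length Ws}" for \<pi>
    using inv_permutes_lessThan_in[OF \<pi> assms]
    by (simp add: permute_list_update[OF \<pi> assms] mprod_list_update_sum str_sum)
  then show ?thesis
    unfolding Psym_eq_sum length_list_update
    by (simp add: sum_distrib_left mult.left_commute sum.swap[of _ A])
qed

lemma Psym_list_update_add:
  assumes "r < length Ws"
  shows "Psym p q D (Ws[r := (\<lambda>i l. c1 * M1 i l + c2 * M2 i l)])
    = c1 * Psym p q D (Ws[r := M1]) + c2 * Psym p q D (Ws[r := M2])"
proof -
  have two_terms: "(\<lambda>i l. c1 * M1 i l + c2 * M2 i l)
      = (\<lambda>i l. \<Sum>a\<in>{0::nat, 1}. (if a = 0 then c1 else c2) * (if a = 0 then M1 else M2) i l)"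
    by (simp add: fun_eq_iff)
  show ?thesis unfolding two_terms Psym_list_update_sum[OF assms] by simp
qed

text \<open>A zero argument kills every product.\<close>

lemma Psym_cong:
  assumes "\<And>i. i < length Ws \<Longrightarrow> Ws ! i \<noteq> (\<lambda>i j. 0) \<Longrightarrow> D i = D' i"
  shows "Psym p q D Ws = Psym p q D' Ws"
proof (cases "\<forall>i < length Ws. Ws ! i \<noteq> (\<lambda>i j. 0)")
  case True
  then show ?thesis unfolding Psym_eq_sum
    by (intro sum.cong refl arg_cong2[where f="(*)"] koszul_sign_cong) (use assms in auto)
next
  case False
  then obtain i where i: "i < length Ws" "Ws ! i = (\<lambda>i j. 0)" by blast
  have "mprod (p + q) (permute (length Ws) \<pi> Ws) = (\<lambda>i j. 0)"
    if \<pi>: "\<pi> permutes {..<length Ws}" for \<pi>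
  proof (rule mprod_zero)
    have "permute (length Ws) \<pi> Ws ! inv \<pi> i = Ws ! i"
      using inv_permutes_lessThan_in[OF \<pi> i(1)] \<pi> by (simp add: permutes_inverses(1))
    then show "(\<lambda>i j. 0) \<in> set (permute (length Ws) \<pi> Ws)"
      using inv_permutes_lessThan_in[OF \<pi> i(1)] i(2) by (metis length_permute nth_mem)
  qed
  then show ?thesis unfolding Psym_eq_sum by (simp add: str_def)
qed

lemma Psym_odd:
  assumes "\<And>i. i < length Ws \<Longrightarrow> homogeneous p (Ws ! i) (d i)" "odd (\<Sum>i<length Ws. d i)"
  shows "Psym p q D Ws = 0"
  unfolding Psym_eq_sum
proof (intro sum.neutral ballI)
  fix \<pi> assume "\<pi> \<in> {\<pi>. \<pi> permutes {..<length Ws}}"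
  then have \<pi>: "\<pi> permutes {..<length Ws}" by simp
  have "homogeneous p (mprod (p + q) (permute (length Ws) \<pi> Ws)) (\<Sum>i<length Ws. d (\<pi> i))"
    using homogeneous_mprod[of "permute (length Ws) \<pi> Ws" p "\<lambda>i. d (\<pi> i)" "p + q"]
      assms(1) permutes_lessThan_in[OF \<pi>] by simp
  moreover have "(\<Sum>i<length Ws. d (\<pi> i)) = (\<Sum>i<length Ws. d i)"
    using sum.permute[OF \<pi>, of d] by (simp add: o_def)
  ultimately show "koszul_sign D \<pi> (length Ws) * str p q (mprod (p + q) (permute (length Ws) \<pi> Ws)) = 0"
    using assms(2) str_homogeneous_odd by (metis mult_zero_right)
qed

lemma Pk_odd:
  assumes "length Ws = k" "\<And>X. X \<in> set Ws \<Longrightarrow> homog p q X" "odd (parsum p Ws)"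
  shows "Pk p q k Ws = 0"
  unfolding Pk_eq_Psym[OF assms(1)]
  by (rule Psym_odd[where d = "\<lambda>i. par p (Ws ! i)"])
     (use assms in \<open>auto simp: parsum_sum intro!: homogeneous_par[where q = q]\<close>)

lemma Pk_list_update_basis:
  assumes "length Ws = k" "r < k" "homog p q V"
  shows "Pk p q k (Ws[r := V])
    = (\<Sum>ab\<in>basis_idx p q. V (fst ab) (snd ab) * Pk p q k (Ws[r := elem (fst ab) (snd ab)]))"
proof -
  let ?D = "\<lambda>a. par p (Ws[r := V] ! a) = 1"
  have "Pk p q k (Ws[r := V]) = Psym p q ?D
      (Ws[r := (\<lambda>i j. \<Sum>ab\<in>basis_idx p q. V (fst ab) (snd ab) * elem (fst ab) (snd ab) i j)])"
    using assms gl_eq_sum_elem[OF homog_gl[OF assms(3)]] by (simp add: Pk_eq_Psym)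
  also have "\<dots> = (\<Sum>ab\<in>basis_idx p q. V (fst ab) (snd ab) * Psym p q ?D (Ws[r := elem (fst ab) (snd ab)]))"
    using assms by (simp add: Psym_list_update_sum)
  also have "\<dots> = (\<Sum>ab\<in>basis_idx p q. V (fst ab) (snd ab) * Pk p q k (Ws[r := elem (fst ab) (snd ab)]))"
  proof (intro sum.cong refl)
    fix ab :: "nat \<times> nat"
    show "V (fst ab) (snd ab) * Psym p q ?D (Ws[r := elem (fst ab) (snd ab)])
        = V (fst ab) (snd ab) * Pk p q k (Ws[r := elem (fst ab) (snd ab)])"
    proof (cases "V (fst ab) (snd ab) = 0")
      case False
      then have "par p V = par p (elem (fst ab) (snd ab))"
        using par_eq_if_bodd[OF assms(3)] by (simp add: par_elem)
      then have "Psym p q ?D (Ws[r := elem (fst ab) (snd ab)])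
          = Psym p q (\<lambda>a. par p (Ws[r := elem (fst ab) (snd ab)] ! a) = 1) (Ws[r := elem (fst ab) (snd ab)])"
        using assms by (intro Psym_cong) (auto simp: nth_list_update)
      then show ?thesis using assms by (simp add: Pk_eq_Psym)
    qed simp
  qed
  finally show ?thesis .
qed

lemma Dop_Pk:
  assumes "length (X # Ws) = k" "\<And>W. W \<in> set (X # Ws) \<Longrightarrow> homog p q W"
  shows "Dop p X (Pk p q k) Ws = Pk p q k (X # Ws)"
  using Pk_odd[OF assms] by (cases "even (parsum p (X # Ws))") (auto simp: Dop_def degpart_def)

section \<open>The homomorphism \<open>s\<close> on multilinear forms\<close>

definition count_odd :: "nat \<Rightarrow> (nat \<times> nat) list \<Rightarrow> nat" where
  "count_odd p idx = length (filter (bodd p) idx)"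

definition odd_pairs_sign :: "nat \<Rightarrow> (nat \<times> nat) list \<Rightarrow> complex" where
  "odd_pairs_sign p idx =
     (-1) ^ card {(u, v). u < v \<and> v < length idx \<and> bodd p (idx ! u) \<and> bodd p (idx ! v)}"

lemma odd_pairs_sign_Cons:
  "odd_pairs_sign p (ab # idx)
    = (-1) ^ ((if bodd p ab then 1 else 0) * count_odd p idx) * odd_pairs_sign p idx"
proof -
  have "card {v. v < length idx \<and> bodd p ab \<and> bodd p (idx ! v)}
      = (if bodd p ab then 1 else 0) * count_odd p idx"
    by (simp add: count_odd_def length_filter_conv_card)
  then show ?thesis
    unfolding odd_pairs_sign_def card_pairs_Cons[of _ _ "\<lambda>a b. bodd p a \<and> bodd p b"]
    by (simp add: power_add)
qed

lemma odd_pairs_sign_squared: "odd_pairs_sign p idx * odd_pairs_sign p idx = 1"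
  by (simp add: odd_pairs_sign_def power_mult_distrib[symmetric])

text \<open>\<open>bracket_coeffs p q idx Us\<close> is the value of \<open>d\<phi>\<^sub>1 \<otimes> \<dots> \<otimes> d\<phi>\<^sub>m\<close> on
  \<open>Us\<close>, where \<open>\<phi>\<^sub>i\<close> is the coordinate function of the basis index \<open>idx ! i\<close> and
  \<open>d\<phi>(X, Y) = - \<phi>([X, Y])\<close>.\<close>

definition bracket_coeffs :: "nat \<Rightarrow> nat \<Rightarrow> (nat \<times> nat) list \<Rightarrow> smat list \<Rightarrow> complex" where
  "bracket_coeffs p q idx Us = (\<Prod>i<length idx.
      - sbracket p q (Us ! (2 * i)) (Us ! (2 * i + 1)) (fst (idx ! i)) (snd (idx ! i)))"

lemma bracket_coeffs_Cons:
  "bracket_coeffs p q (ab # idx) (U0 # U1 # Us)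
    = - sbracket p q U0 U1 (fst ab) (snd ab) * bracket_coeffs p q idx Us"
proof -
  have "\<And>i. 2 * Suc i = Suc (Suc (2 * i))" "\<And>i. 2 * Suc i + 1 = Suc (Suc (2 * i + 1))"
    by simp_all
  then show ?thesis
    unfolding bracket_coeffs_def length_Cons prod.lessThan_Suc_shift by simp
qed

lemma parsum_Cons: "parsum p (X # Xs) = par p X + parsum p Xs"
  by (simp add: parsum_def)

lemma bracket_coeffs_nonzero_parity:
  assumes "bracket_coeffs p q idx Us \<noteq> 0" "length Us = 2 * length idx"
    "\<And>U. U \<in> set Us \<Longrightarrow> homog p q U"
  shows "even (parsum p Us + count_odd p idx)"
  using assms
proof (induction idx arbitrary: Us)
  case Nil
  then show ?case by (simp add: parsum_def count_odd_def)
next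
  case (Cons ab idx)
  then obtain U0 U1 Us' where Us: "Us = U0 # U1 # Us'"
    by (metis Suc_length_conv length_Cons mult_Suc_right add_2_eq_Suc)
  have ne: "sbracket p q U0 U1 (fst ab) (snd ab) \<noteq> 0" "bracket_coeffs p q idx Us' \<noteq> 0"
    using Cons.prems(1) unfolding Us bracket_coeffs_Cons by auto
  have "even (parsum p Us' + count_odd p idx)"
    using Cons.IH[OF ne(2)] Cons.prems(2,3) Us by auto
  moreover have "bodd p ab \<longleftrightarrow> odd (par p U0 + par p U1)"
    using homogeneous_sbracket_par[of p q U0 U1] Cons.prems(3) ne(1) Us
    by (auto simp: homogeneous_def bodd_def)
  ultimately show ?case
    unfolding Us by (auto simp: parsum_Cons count_odd_def)
qed

lemma boxt_eq:
  "boxt p a F G Xs = (if G (drop a Xs) = 0 then 0 else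
     (-1) ^ ((parsum p (drop a Xs) mod 2) * parsum p (take a Xs)) * F (take a Xs) * G (drop a Xs))"
proof (cases "even (parsum p (drop a Xs))")
  case True
  then have "parsum p (drop a Xs) mod 2 = 0" by presburger
  then show ?thesis using True by (simp add: boxt_def degpart_def)
next
  case False
  then have "parsum p (drop a Xs) mod 2 = 1" by presburger
  then show ?thesis using False by (simp add: boxt_def degpart_def)
qed

text \<open>The signs match because at a nonzero entry \<open>(a, b)\<close> the bracket
  \<open>[U\<^sub>0, U\<^sub>1]\<close> has the parity of the coordinate function \<open>dualf a b\<close>.\<close>

lemma boxt_dop_dualf:
  assumes "homog p q U0" "homog p q U1"
    and "W Us \<noteq> 0 \<Longrightarrow> parsum p Us mod 2 = c mod 2"
  shows "boxt p 2 (dop p q (dualf a b)) W (U0 # U1 # Us)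
    = (-1) ^ ((if bodd p (a, b) then 1 else 0) * c) * - sbracket p q U0 U1 a b * W Us"
proof (cases "W Us = 0 \<or> sbracket p q U0 U1 a b = 0")
  case False
  then have "bodd p (a, b) \<longleftrightarrow> odd (par p U0 + par p U1)"
    using homogeneous_sbracket_par[OF assms(1,2)] by (auto simp: homogeneous_def bodd_def)
  moreover have "even (parsum p Us mod 2) \<longleftrightarrow> even c"
    using assms(3) False by presburger
  ultimately have "(-1::complex) ^ ((parsum p Us mod 2) * (par p U0 + par p U1))
      = (-1) ^ ((if bodd p (a, b) then 1 else 0) * c)"
    by (simp add: minus_one_power_iff)
  then show ?thesis
    using False by (simp add: boxt_eq numeral_2_eq_2 parsum_def dop_def dualf_def)
qed (auto simp: boxt_eq numeral_2_eq_2 dop_def dualf_def parsum_def)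

lemma altz_bracket_coeffs_nonzero_parity:
  assumes "altz p (2 * length idx) (bracket_coeffs p q idx) Us \<noteq> 0"
    "length Us = 2 * length idx" "\<And>U. U \<in> set Us \<Longrightarrow> homog p q U"
  shows "parsum p Us mod 2 = count_odd p idx mod 2"
proof -
  obtain \<tau> where \<tau>: "\<tau> permutes {..<2 * length idx}"
    "bracket_coeffs p q idx (permute (2 * length idx) \<tau> Us) \<noteq> 0"
    using assms(1) by (rule altz_nonzero)
  have "even (parsum p (permute (2 * length idx) \<tau> Us) + count_odd p idx)"
    using \<tau> assms set_permute_subset[OF \<tau>(1)] by (intro bracket_coeffs_nonzero_parity) auto
  moreover have "parsum p (permute (2 * length idx) \<tau> Us) = parsum p Us"
    using parsum_permute[of \<tau> Us p] \<tau>(1) assms(2) by simp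
  ultimately have "even (parsum p Us + count_odd p idx)" by simp
  then show ?thesis by (simp add: mod2_eq_if)
qed

lemma boxt_dop_dualf_altz_bracket_coeffs:
  assumes W: "\<And>Vs. length Vs = 2 * length idx \<Longrightarrow> (\<And>V. V \<in> set Vs \<Longrightarrow> homog p q V) \<Longrightarrow>
      W Vs = odd_pairs_sign p idx / 2 ^ length idx * altz p (2 * length idx) (bracket_coeffs p q idx) Vs"
    and Us: "length Us = 2 + 2 * length idx" "\<And>U. U \<in> set Us \<Longrightarrow> homog p q U"
  shows "boxt p 2 (dop p q (dualf a b)) W Us
    = (-1) ^ ((if bodd p (a, b) then 1 else 0) * count_odd p idx) * (odd_pairs_sign p idx / 2 ^ length idx)
      * altz p (2 * length idx) (\<lambda>Vs. bracket_coeffs p q ((a, b) # idx) (take 2 Us @ Vs)) (drop 2 Us)"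
proof -
  obtain U0 U1 Us' where U: "Us = U0 # U1 # Us'"
    using Us(1) by (cases Us; cases "tl Us") auto
  have Us': "length Us' = 2 * length idx" "\<And>U. U \<in> set Us' \<Longrightarrow> homog p q U"
    using Us unfolding U by auto
  have "W Us' \<noteq> 0 \<Longrightarrow> parsum p Us' mod 2 = count_odd p idx mod 2"
    using W[OF Us'] Us' by (intro altz_bracket_coeffs_nonzero_parity) auto
  then have "boxt p 2 (dop p q (dualf a b)) W Us
      = (-1) ^ ((if bodd p (a, b) then 1 else 0) * count_odd p idx) * - sbracket p q U0 U1 a b * W Us'"
    unfolding U using Us(2) by (intro boxt_dop_dualf) (auto simp: U)
  moreover have "altz p (2 * length idx) (\<lambda>Vs. bracket_coeffs p q ((a, b) # idx) (take 2 Us @ Vs)) (drop 2 Us)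
      = altz p (2 * length idx) (\<lambda>Vs. - sbracket p q U0 U1 a b * bracket_coeffs p q idx Vs) Us'"
    by (simp add: U numeral_2_eq_2 bracket_coeffs_Cons)
  ultimately show ?thesis
    using W[OF Us'] by (simp only: altz_cmult) simp
qed

lemma wedge_list_dop_dualf:
  assumes "length Zs = 2 * length idx" "\<And>Z. Z \<in> set Zs \<Longrightarrow> homog p q Z"
  shows "wedge_list p (map (\<lambda>(x, y). dop p q (dualf x y)) idx) Zs
     = odd_pairs_sign p idx / 2 ^ length idx
       * altz p (2 * length idx) (bracket_coeffs p q idx) Zs"
  using assms
proof (induction idx arbitrary: Zs)
  case Nil
  have "{\<sigma>. \<sigma> permutes ({}::nat set)} = {id}"
    by auto
  then show ?case
    by (simp add: altz_def odd_pairs_sign_def bracket_coeffs_def koszul_def)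
next
  case (Cons ab idx)
  obtain a b where ab: "ab = (a, b)" by fastforce
  define l where "l = length idx"
  define W where "W = wedge_list p (map (\<lambda>(x, y). dop p q (dualf x y)) idx)"
  define c where "c = (-1) ^ ((if bodd p ab then 1 else 0) * count_odd p idx)
      * (odd_pairs_sign p idx / 2 ^ l)"
  have "wedge_list p (map (\<lambda>(x, y). dop p q (dualf x y)) (ab # idx)) Zs
      = altz p (2 + 2 * l) (boxt p 2 (dop p q (dualf a b)) W) Zs / (2 * fact (2 * l))"
    by (simp add: ab swedge_def W_def l_def)
  also have "altz p (2 + 2 * l) (boxt p 2 (dop p q (dualf a b)) W) Zs = c * altz p (2 + 2 * l)
      (\<lambda>Us. altz p (2 * l) (\<lambda>Vs. bracket_coeffs p q (ab # idx) (take 2 Us @ Vs)) (drop 2 Us)) Zs"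
  proof (subst altz_cmult[symmetric], rule altz_cong)
    fix \<sigma> assume "\<sigma> permutes {..<2 + 2 * l}"
    then show "boxt p 2 (dop p q (dualf a b)) W (permute (2 + 2 * l) \<sigma> Zs)
        = c * altz p (2 * l) (\<lambda>Vs. bracket_coeffs p q (ab # idx)
            (take 2 (permute (2 + 2 * l) \<sigma> Zs) @ Vs)) (drop 2 (permute (2 + 2 * l) \<sigma> Zs))"
      using Cons set_permute_subset[OF \<open>\<sigma> permutes _\<close>] unfolding c_def ab l_def W_def
      by (intro boxt_dop_dualf_altz_bracket_coeffs) auto
  qed
  also have "altz p (2 + 2 * l)
      (\<lambda>Us. altz p (2 * l) (\<lambda>Vs. bracket_coeffs p q (ab # idx) (take 2 Us @ Vs)) (drop 2 Us)) Zs
      = fact (2 * l) * altz p (2 + 2 * l) (bracket_coeffs p q (ab # idx)) Zs"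
    using Cons.prems(1) by (intro altz_altz_drop) (simp add: l_def)
  finally show ?case
    by (simp add: c_def l_def odd_pairs_sign_Cons mult_ac)
qed

definition basis_lists :: "nat \<Rightarrow> nat \<Rightarrow> nat \<Rightarrow> (nat \<times> nat) list set" where
  "basis_lists p q m = {idx. length idx = m \<and> set idx \<subseteq> basis_idx p q}"

lemma finite_basis_lists [simp]: "finite (basis_lists p q m)"
proof -
  have "basis_lists p q m = {xs. set xs \<subseteq> basis_idx p q \<and> length xs = m}"
    by (auto simp: basis_lists_def)
  then show ?thesis
    using finite_lists_length_eq[OF finite_basis_idx] by simp
qed

lemma sum_basis_lists_Suc:
  "(\<Sum>idx\<in>basis_lists p q (Suc m). f idx) = (\<Sum>a\<in>basis_idx p q. \<Sum>l\<in>basis_lists p q m. f (a # l))"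
proof -
  have "basis_lists p q (Suc m) = (\<lambda>(a, l). a # l) ` (basis_idx p q \<times> basis_lists p q m)"
    unfolding basis_lists_def by (auto simp: length_Suc_conv image_iff)
  moreover have "inj_on (\<lambda>(a, l). a # l) (basis_idx p q \<times> basis_lists p q m)"
    by (auto simp: inj_on_def)
  ultimately show ?thesis
    by (simp add: sum.reindex sum.cartesian_product split_def)
qed

lemma homog_elems_basis_list:
  "idx \<in> basis_lists p q m \<Longrightarrow> X \<in> set (map (\<lambda>(x, y). elem x y) idx) \<Longrightarrow> homog p q X"
  by (auto simp: basis_lists_def homog_elem)

definition multilinear_gl :: "nat \<Rightarrow> nat \<Rightarrow> (smat list \<Rightarrow> complex) \<Rightarrow> nat \<Rightarrow> bool" where
  "multilinear_gl p q F m \<longleftrightarrow> (\<forall>Ws r V. length Ws = m \<longrightarrow> r < m \<longrightarrow> homog p q V \<longrightarrow>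
      F (Ws[r := V]) = (\<Sum>ab\<in>basis_idx p q. V (fst ab) (snd ab) * F (Ws[r := elem (fst ab) (snd ab)])))"

lemma multilinear_gl_Cons:
  assumes "multilinear_gl p q F (Suc m)"
  shows "multilinear_gl p q (\<lambda>Ws. F (X # Ws)) m"
  unfolding multilinear_gl_def
proof (intro allI impI)
  fix Ws :: "smat list" and r V assume "length Ws = m" "r < m" "homog p q V"
  then show "F (X # Ws[r := V])
      = (\<Sum>ab\<in>basis_idx p q. V (fst ab) (snd ab) * F (X # Ws[r := elem (fst ab) (snd ab)]))"
    using assms[unfolded multilinear_gl_def, rule_format, of "X # Ws" "Suc r" V] by simp
qed

lemma Pk_Cons_multilinear_gl:
  assumes "homog p q Y"
  shows "multilinear_gl p q (\<lambda>Ws. Pk p q (Suc m) (Y # Ws)) m"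
  unfolding multilinear_gl_def
proof (intro allI impI)
  fix Ws :: "smat list" and r V assume "length Ws = m" "r < m" "homog p q V"
  then show "Pk p q (Suc m) (Y # Ws[r := V])
      = (\<Sum>ab\<in>basis_idx p q. V (fst ab) (snd ab) * Pk p q (Suc m) (Y # Ws[r := elem (fst ab) (snd ab)]))"
    using Pk_list_update_basis[of "Y # Ws" "Suc m" "Suc r" p q V] by simp
qed

lemma multilinear_gl_expansion:
  assumes "multilinear_gl p q F m" "length Vs = m" "\<And>V. V \<in> set Vs \<Longrightarrow> homog p q V"
  shows "(\<Sum>idx\<in>basis_lists p q m. F (map (\<lambda>(x, y). elem x y) idx)
      * (\<Prod>i<m. (Vs ! i) (fst (idx ! i)) (snd (idx ! i)))) = F Vs"
  using assms
proof (induction m arbitrary: F Vs)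
  case 0
  have "basis_lists p q 0 = {[]}"
    by (auto simp: basis_lists_def)
  then show ?case using 0 by simp
next
  case (Suc m)
  obtain V Vs' where Vs: "Vs = V # Vs'"
    using Suc.prems(2) by (metis Suc_length_conv)
  have Vs': "length Vs' = m" "\<And>V. V \<in> set Vs' \<Longrightarrow> homog p q V"
    using Suc.prems(2,3) Vs by auto
  have "(\<Sum>idx\<in>basis_lists p q (Suc m). F (map (\<lambda>(x, y). elem x y) idx)
        * (\<Prod>i<Suc m. (Vs ! i) (fst (idx ! i)) (snd (idx ! i))))
      = (\<Sum>ab\<in>basis_idx p q. V (fst ab) (snd ab) * (\<Sum>l\<in>basis_lists p q m.
          F (elem (fst ab) (snd ab) # map (\<lambda>(x, y). elem x y) l)
          * (\<Prod>i<m. (Vs' ! i) (fst (l ! i)) (snd (l ! i)))))"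
    unfolding sum_basis_lists_Suc prod.lessThan_Suc_shift
    by (rule sum.cong[OF refl]) (simp add: Vs sum_distrib_left mult_ac split_def)
  also have "\<dots> = (\<Sum>ab\<in>basis_idx p q. V (fst ab) (snd ab) * F (elem (fst ab) (snd ab) # Vs'))"
    using Suc.IH[OF multilinear_gl_Cons[OF Suc.prems(1)] Vs'] by simp
  also have "\<dots> = F Vs"
    using Suc.prems(1)[unfolded multilinear_gl_def, rule_format, of "V # Vs'" 0 V] Suc.prems(3) Vs'
    by (simp add: Vs)
  finally show ?case .
qed

definition pair_brackets :: "nat \<Rightarrow> nat \<Rightarrow> nat \<Rightarrow> smat list \<Rightarrow> smat list" where
  "pair_brackets p q m Us = map (\<lambda>i. sbracket p q (Us ! (2 * i)) (Us ! (2 * i + 1))) [0..<m]"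

lemma length_pair_brackets [simp]: "length (pair_brackets p q m Us) = m"
  by (simp add: pair_brackets_def)

lemma nth_pair_brackets [simp]:
  "i < m \<Longrightarrow> pair_brackets p q m Us ! i = sbracket p q (Us ! (2 * i)) (Us ! (2 * i + 1))"
  by (simp add: pair_brackets_def)

lemma homog_pair_brackets:
  assumes "length Us = 2 * m" "\<And>U. U \<in> set Us \<Longrightarrow> homog p q U" "V \<in> set (pair_brackets p q m Us)"
  shows "homog p q V"
proof -
  obtain i where "i < m" "V = sbracket p q (Us ! (2 * i)) (Us ! (2 * i + 1))"
    using assms(3) by (auto simp: pair_brackets_def)
  then show ?thesis
    using assms(1,2) by (auto intro!: homog_sbracket)
qed

lemma sum_basis_lists_bracket_coeffs:
  assumes "multilinear_gl p q F m" "length Us = 2 * m" "\<And>U. U \<in> set Us \<Longrightarrow> homog p q U"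
  shows "(\<Sum>idx\<in>basis_lists p q m. F (map (\<lambda>(x, y). elem x y) idx) * bracket_coeffs p q idx Us)
    = (-1) ^ m * F (pair_brackets p q m Us)"
proof -
  have "(\<Sum>idx\<in>basis_lists p q m. F (map (\<lambda>(x, y). elem x y) idx) * bracket_coeffs p q idx Us)
      = (-1) ^ m * (\<Sum>idx\<in>basis_lists p q m. F (map (\<lambda>(x, y). elem x y) idx)
          * (\<Prod>i<m. (pair_brackets p q m Us ! i) (fst (idx ! i)) (snd (idx ! i))))"
    unfolding sum_distrib_left
    by (rule sum.cong[OF refl]) (simp add: bracket_coeffs_def basis_lists_def prod_uminus mult_ac)
  also have "\<dots> = (-1) ^ m * F (pair_brackets p q m Us)"
    by (subst multilinear_gl_expansion[OF assms(1)]) (auto intro: homog_pair_brackets[OF assms(2,3)])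
  finally show ?thesis .
qed

text \<open>Expand each \<open>s(\<phi>) = d\<phi>\<close> by \<open>wedge_list_dop_dualf\<close>; the two Koszul signs
  of the expansion cancel and multilinearity recombines the coordinates of the brackets
  into \<open>F\<close>.\<close>

lemma smap_eq_altz_pair_brackets:
  assumes F: "multilinear_gl p q F m"
    and Zs: "length Zs = 2 * m" "\<And>Z. Z \<in> set Zs \<Longrightarrow> homog p q Z"
  shows "smap p q m F Zs
    = (-1) ^ m / (fact m * 2 ^ m) * altz p (2 * m) (\<lambda>Us. F (pair_brackets p q m Us)) Zs"
proof -
  have "smap p q m F Zs = (\<Sum>idx\<in>basis_lists p q m. odd_pairs_sign p idx * odd_pairs_sign p idx
      * (F (map (\<lambda>(x, y). elem x y) idx) * altz p (2 * m) (bracket_coeffs p q idx) Zs))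
      / (fact m * 2 ^ m)"
    unfolding smap_def basis_lists_def[symmetric] sum_divide_distrib
  proof (intro sum.cong refl)
    fix idx assume "idx \<in> basis_lists p q m"
    then have "length idx = m" by (simp add: basis_lists_def)
    then have "(-1) ^ card {(u, v). u < v \<and> v < m \<and> bodd p (idx ! u) \<and> bodd p (idx ! v)}
        = odd_pairs_sign p idx"
      by (simp add: odd_pairs_sign_def)
    with \<open>length idx = m\<close> show "(-1) ^ card {(u, v). u < v \<and> v < m \<and> bodd p (idx ! u) \<and> bodd p (idx ! v)}
        * F (map (\<lambda>(x, y). elem x y) idx)
        * wedge_list p (map (\<lambda>(x, y). dop p q (dualf x y)) idx) Zs / fact m
      = odd_pairs_sign p idx * odd_pairs_sign p idx
        * (F (map (\<lambda>(x, y). elem x y) idx) * altz p (2 * m) (bracket_coeffs p q idx) Zs)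
        / (fact m * 2 ^ m)"
      using wedge_list_dop_dualf[of Zs idx p q] Zs by (simp add: mult_ac)
  qed
  also have "\<dots> = altz p (2 * m) (\<lambda>Us. \<Sum>idx\<in>basis_lists p q m.
      F (map (\<lambda>(x, y). elem x y) idx) * bracket_coeffs p q idx Us) Zs / (fact m * 2 ^ m)"
    by (simp add: odd_pairs_sign_squared altz_sum)
  also have "altz p (2 * m) (\<lambda>Us. \<Sum>idx\<in>basis_lists p q m.
      F (map (\<lambda>(x, y). elem x y) idx) * bracket_coeffs p q idx Us) Zs
      = altz p (2 * m) (\<lambda>Us. (-1) ^ m * F (pair_brackets p q m Us)) Zs"
    using Zs set_permute_subset
    by (intro altz_cong sum_basis_lists_bracket_coeffs[OF F]) (auto, blast)
  finally show ?thesis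
    by (simp add: altz_cmult)
qed

lemma smap_cong:
  assumes "\<And>idx. idx \<in> basis_lists p q m \<Longrightarrow>
    F (map (\<lambda>(x, y). elem x y) idx) = G (map (\<lambda>(x, y). elem x y) idx)"
  shows "smap p q m F Zs = smap p q m G Zs"
  unfolding smap_def basis_lists_def[symmetric] using assms by simp

lemma smap_sum:
  "smap p q m (\<lambda>Ws. \<Sum>a\<in>A. c a * F a Ws) Zs = (\<Sum>a\<in>A. c a * smap p q m (F a) Zs)"
  unfolding smap_def
  by (simp add: sum_divide_distrib[symmetric] sum_distrib_left sum_distrib_right mult_ac sum.swap[of _ A])

section \<open>Reduction of the transgression to one antisymmetrization\<close>

lemma sum_lessThan_double:
  "(\<Sum>i<2 * (m::nat). f i) = (\<Sum>i<m. f (2 * i) + (f (2 * i + 1) :: 'a::comm_monoid_add))"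
  by (induction m) (auto simp: numeral_2_eq_2 add_ac)

lemma parsum_pairs:
  "length Us = 2 * m \<Longrightarrow> parsum p Us = (\<Sum>i<m. par p (Us ! (2 * i)) + par p (Us ! (2 * i + 1)))"
  by (simp add: parsum_sum sum_lessThan_double)

lemma Pk_Cons_pair_brackets_nonzero_parity:
  assumes "Pk p q (Suc m) (Y # pair_brackets p q m Us) \<noteq> 0" "homog p q Y"
    "length Us = 2 * m" "\<And>U. U \<in> set Us \<Longrightarrow> homog p q U"
  shows "even (par p Y + parsum p Us)"
proof (rule ccontr)
  define d where "d i = (if i = 0 then par p Y
      else par p (Us ! (2 * (i - 1))) + par p (Us ! (2 * (i - 1) + 1)))" for i
  assume "\<not> even (par p Y + parsum p Us)"
  moreover have "(\<Sum>i<Suc m. d i) = par p Y + parsum p Us"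
    unfolding sum.lessThan_Suc_shift by (simp add: d_def parsum_pairs[OF assms(3)])
  moreover have "homogeneous p ((Y # pair_brackets p q m Us) ! i) (d i)" if "i < Suc m" for i
    using that assms(2-4)
    by (cases i) (auto simp: d_def intro!: homogeneous_par homogeneous_sbracket_par)
  ultimately have "Psym p q (\<lambda>a. par p ((Y # pair_brackets p q m Us) ! a) = 1)
      (Y # pair_brackets p q m Us) = 0"
    by (intro Psym_odd[where d = d]) auto
  then show False
    using assms(1) by (simp add: Pk_eq_Psym)
qed

lemma smap_Pk_Cons_nonzero_parity:
  assumes "smap p q m (\<lambda>Ws. Pk p q (Suc m) (Y # Ws)) Zs \<noteq> 0" "homog p q Y"
    "length Zs = 2 * m" "\<And>Z. Z \<in> set Zs \<Longrightarrow> homog p q Z"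
  shows "even (par p Y + parsum p Zs)"
proof -
  have "altz p (2 * m) (\<lambda>Us. Pk p q (Suc m) (Y # pair_brackets p q m Us)) Zs \<noteq> 0"
    using assms smap_eq_altz_pair_brackets[OF Pk_Cons_multilinear_gl[OF assms(2)] assms(3,4)]
    by auto
  then obtain \<sigma> where \<sigma>: "\<sigma> permutes {..<2 * m}"
    "Pk p q (Suc m) (Y # pair_brackets p q m (permute (2 * m) \<sigma> Zs)) \<noteq> 0"
    by (rule altz_nonzero)
  have "even (par p Y + parsum p (permute (2 * m) \<sigma> Zs))"
    using \<sigma> assms set_permute_subset[OF \<sigma>(1) assms(3)]
    by (intro Pk_Cons_pair_brackets_nonzero_parity) auto
  then show ?thesis
    using parsum_permute[of \<sigma> Zs p] \<sigma>(1) assms(3) by simp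
qed

lemma sum_elem_Pk_Cons:
  assumes "length Ws = m" "homog p q Y"
  shows "(\<Sum>ab\<in>basis_idx p q. Y (fst ab) (snd ab) * Pk p q (Suc m) (elem (fst ab) (snd ab) # Ws))
    = Pk p q (Suc m) (Y # Ws)"
  using Pk_list_update_basis[of "Y # Ws" "Suc m" 0 p q Y] assms by simp

lemma smap_Dop_elem_Pk:
  assumes "ab \<in> basis_idx p q"
  shows "smap p q m (Dop p (elem (fst ab) (snd ab)) (Pk p q (Suc m))) Zs
    = smap p q m (\<lambda>Ws. Pk p q (Suc m) (elem (fst ab) (snd ab) # Ws)) Zs"
  using assms homog_elem[of "fst ab" "snd ab" p q] homog_elems_basis_list
  by (intro smap_cong Dop_Pk) (auto simp: basis_lists_def intro!: homog_elem)

lemma signed_boxt_dualf_Cons: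
  assumes "homog p q Y"
  shows "(if bodd p ab then -1 else 1) * boxt p 1 (dualf (fst ab) (snd ab)) G (Y # Zs)
    = (-1) ^ ((parsum p Zs mod 2) * par p Y) * (-1) ^ par p Y * (Y (fst ab) (snd ab) * G Zs)"
proof (cases "Y (fst ab) (snd ab) = 0")
  case False
  then have "(if bodd p ab then -1 else 1) = ((-1) ^ par p Y :: complex)"
    using par_eq_if_bodd[OF assms False] by simp
  then show ?thesis
    by (simp add: boxt_eq parsum_def dualf_def)
qed (simp add: boxt_eq dualf_def)

text \<open>The sign of an odd basis element \<open>E\<close> in \<open>t(P\<^sub>k)\<close> cancels the Koszul sign
  of \<open>\<phi> \<boxtimes> s(D\<^sub>E P\<^sub>k)\<close> on \<open>Y # Zs\<close>; summing the coordinates of \<open>Y\<close> against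
  \<open>P\<^sub>k(E, \<dots>)\<close> then rebuilds \<open>P\<^sub>k(Y, \<dots>)\<close>.\<close>

lemma sum_basis_boxt_dualf_smap_Dop:
  assumes "homog p q Y" "length Zs = 2 * m" "\<And>Z. Z \<in> set Zs \<Longrightarrow> homog p q Z"
  shows "(\<Sum>ab\<in>basis_idx p q. (if bodd p ab then -1 else 1) *
      boxt p 1 (dualf (fst ab) (snd ab)) (smap p q m (Dop p (elem (fst ab) (snd ab)) (Pk p q (Suc m))))
        (Y # Zs))
    = smap p q m (\<lambda>Ws. Pk p q (Suc m) (Y # Ws)) Zs"
proof -
  let ?S = "smap p q m (\<lambda>Ws. Pk p q (Suc m) (Y # Ws)) Zs"
  define e :: complex where "e = (-1) ^ ((parsum p Zs mod 2) * par p Y) * (-1) ^ par p Y"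
  have "(\<Sum>ab\<in>basis_idx p q. (if bodd p ab then -1 else 1) *
      boxt p 1 (dualf (fst ab) (snd ab)) (smap p q m (Dop p (elem (fst ab) (snd ab)) (Pk p q (Suc m))))
        (Y # Zs))
    = e * (\<Sum>ab\<in>basis_idx p q. Y (fst ab) (snd ab)
        * smap p q m (\<lambda>Ws. Pk p q (Suc m) (elem (fst ab) (snd ab) # Ws)) Zs)"
    unfolding sum_distrib_left e_def
    by (intro sum.cong refl) (subst signed_boxt_dualf_Cons[OF assms(1)], simp add: smap_Dop_elem_Pk)
  also have "(\<Sum>ab\<in>basis_idx p q. Y (fst ab) (snd ab)
        * smap p q m (\<lambda>Ws. Pk p q (Suc m) (elem (fst ab) (snd ab) # Ws)) Zs) = ?S"
    unfolding smap_sum[symmetric]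
    using assms(1) by (intro smap_cong sum_elem_Pk_Cons) (auto simp: basis_lists_def)
  also have "e * ?S = ?S"
  proof (cases "?S = 0")
    case False
    then have "even (par p Y + parsum p Zs)"
      using assms by (intro smap_Pk_Cons_nonzero_parity)
    then have "e = 1"
      using par_cases[of p Y] by (auto simp: e_def)
    then show ?thesis by simp
  qed simp
  finally show ?thesis .
qed

lemma sum_filter_diff_eq_signed_sum:
  fixes f :: "'a \<Rightarrow> complex"
  assumes "finite A"
  shows "(\<Sum>x\<in>{x\<in>A. \<not> P x}. f x) - (\<Sum>x\<in>{x\<in>A. P x}. f x) = (\<Sum>x\<in>A. (if P x then -1 else 1) * f x)"
proof -
  have "(\<Sum>x\<in>A. (if P x then -1 else 1) * f x) = (\<Sum>x\<in>A. if P x then - f x else f x)"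
    by (rule sum.cong) auto
  also have "\<dots> = (\<Sum>x\<in>{x\<in>A. P x}. - f x) + (\<Sum>x\<in>{x\<in>A. \<not> P x}. f x)"
    using sum.If_cases[OF assms] by (simp add: Int_def conj_commute)
  finally show ?thesis by (simp add: sum_negf)
qed

lemma transg_Pk_eq_altz_pair_brackets:
  assumes Xs: "length Xs = Suc (2 * m)" "\<And>X. X \<in> set Xs \<Longrightarrow> homog p q X"
  shows "transg p q (Suc m) (Pk p q (Suc m)) Xs = (-1) ^ m / (fact m * 2 ^ m)
    * altz p (Suc (2 * m)) (\<lambda>Ys. Pk p q (Suc m) (hd Ys # pair_brackets p q m (tl Ys))) Xs"
proof -
  let ?P = "Pk p q (Suc m)"
  let ?T = "\<lambda>ab. altz p (Suc (2 * m))
      (boxt p 1 (dualf (fst ab) (snd ab)) (smap p q m (Dop p (elem (fst ab) (snd ab)) ?P))) Xs"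
  have "transg p q (Suc m) ?P Xs = ((\<Sum>ab\<in>{ab\<in>basis_idx p q. \<not> bodd p ab}. ?T ab)
      - (\<Sum>ab\<in>{ab\<in>basis_idx p q. bodd p ab}. ?T ab)) / fact (2 * m)"
    by (simp add: transg_def swedge_def diff_divide_distrib sum_divide_distrib)
  also have "\<dots> = (\<Sum>ab\<in>basis_idx p q. (if bodd p ab then -1 else 1) * ?T ab) / fact (2 * m)"
    by (simp add: sum_filter_diff_eq_signed_sum)
  also have "(\<Sum>ab\<in>basis_idx p q. (if bodd p ab then -1 else 1) * ?T ab)
      = altz p (Suc (2 * m)) (\<lambda>Ys. (-1) ^ m / (fact m * 2 ^ m)
          * altz p (2 * m) (\<lambda>Us. ?P (hd Ys # pair_brackets p q m Us)) (tl Ys)) Xs"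
    unfolding altz_sum[symmetric]
  proof (rule altz_cong)
    fix \<sigma> assume \<sigma>: "\<sigma> permutes {..<Suc (2 * m)}"
    obtain Y Zs where YZs: "permute (Suc (2 * m)) \<sigma> Xs = Y # Zs" "length Zs = 2 * m"
        "set (Y # Zs) \<subseteq> set Xs"
      by (rule permute_Suc_eq_Cons[OF \<sigma> Xs(1)])
    then have hom: "homog p q Y" "\<And>Z. Z \<in> set Zs \<Longrightarrow> homog p q Z"
      using Xs(2) by auto
    have "(\<Sum>ab\<in>basis_idx p q. (if bodd p ab then -1 else 1)
        * boxt p 1 (dualf (fst ab) (snd ab)) (smap p q m (Dop p (elem (fst ab) (snd ab)) ?P)) (Y # Zs))
      = smap p q m (\<lambda>Ws. ?P (Y # Ws)) Zs"
      by (rule sum_basis_boxt_dualf_smap_Dop[OF hom(1) YZs(2) hom(2)])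
    also have "\<dots> = (-1) ^ m / (fact m * 2 ^ m) * altz p (2 * m) (\<lambda>Us. ?P (Y # pair_brackets p q m Us)) Zs"
      by (rule smap_eq_altz_pair_brackets[OF Pk_Cons_multilinear_gl[OF hom(1)] YZs(2) hom(2)])
    finally show "(\<Sum>ab\<in>basis_idx p q. (if bodd p ab then -1 else 1)
        * boxt p 1 (dualf (fst ab) (snd ab)) (smap p q m (Dop p (elem (fst ab) (snd ab)) ?P))
          (permute (Suc (2 * m)) \<sigma> Xs))
      = (-1) ^ m / (fact m * 2 ^ m) * altz p (2 * m) (\<lambda>Us. ?P (hd (permute (Suc (2 * m)) \<sigma> Xs)
          # pair_brackets p q m Us)) (tl (permute (Suc (2 * m)) \<sigma> Xs))"
      unfolding YZs(1) list.sel .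
  qed
  also have "\<dots> = (-1) ^ m / (fact m * 2 ^ m) * fact (2 * m)
      * altz p (Suc (2 * m)) (\<lambda>Ys. ?P (hd Ys # pair_brackets p q m (tl Ys))) Xs"
    using altz_altz_tl[OF Xs(1), of p "\<lambda>Ys. ?P (hd Ys # pair_brackets p q m (tl Ys))"]
    by (subst altz_cmult) simp
  finally show ?thesis by simp
qed

section \<open>From brackets to products\<close>

definition pair_prod :: "nat \<Rightarrow> nat \<Rightarrow> smat list \<Rightarrow> nat \<Rightarrow> smat" where
  "pair_prod p q Ys i = mmult (p + q) (Ys ! (2 * i + 1)) (Ys ! (2 * i + 2))"

definition pair_bracket :: "nat \<Rightarrow> nat \<Rightarrow> smat list \<Rightarrow> nat \<Rightarrow> smat" where
  "pair_bracket p q Ys i = sbracket p q (Ys ! (2 * i + 1)) (Ys ! (2 * i + 2))"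

definition partial_prods :: "nat \<Rightarrow> nat \<Rightarrow> nat \<Rightarrow> nat \<Rightarrow> smat list \<Rightarrow> smat list" where
  "partial_prods p q m j Ys =
     Ys ! 0 # map (\<lambda>i. if i < j then pair_prod p q Ys i else pair_bracket p q Ys i) [0..<m]"

lemma length_partial_prods [simp]: "length (partial_prods p q m j Ys) = Suc m"
  by (simp add: partial_prods_def)

text \<open>Read off from the factors, so that it is also meaningful for a block that is
  zero.\<close>

definition block_parity :: "nat \<Rightarrow> smat list \<Rightarrow> nat \<Rightarrow> bool" where
  "block_parity p Ys a = (if a = 0 then par p (Ys ! 0) = 1
     else odd (par p (Ys ! (2 * a - 1)) + par p (Ys ! (2 * a))))"

lemma koszul_block_perm:
  assumes "\<pi> permutes {..<Suc m}"
  shows "koszul p (Suc (2 * m)) (block_perm m \<pi>) Ys = koszul_sign (block_parity p Ys) \<pi> (Suc m)"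
  unfolding koszul_eq_koszul_sign koszul_sign_block_perm[OF assms]
proof (rule koszul_sign_cong[OF assms])
  fix a
  show "odd_block (\<lambda>a. par p (Ys ! a) = 1) a = block_parity p Ys a"
    using par_cases[of p "Ys ! (2 * a - 1)"] par_cases[of p "Ys ! (2 * a)"]
    by (cases a) (auto simp: odd_block_def block_parity_def)
qed

lemma alt_sign_block_perm:
  assumes "\<pi> permutes {..<Suc m}"
  shows "alt_sign p (Suc (2 * m)) (block_perm m \<pi>) Ys = koszul_sign (block_parity p Ys) \<pi> (Suc m)"
  by (simp add: alt_sign_def sign_block_perm[OF assms] koszul_block_perm[OF assms])

lemma mprod_permute_block_perm:
  assumes \<pi>: "\<pi> permutes {..<Suc m}" and Ys: "length Ys = Suc (2 * m)" "set Ys \<subseteq> gl p q"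
  shows "mprod (p + q) (permute (Suc (2 * m)) (block_perm m \<pi>) Ys)
    = mprod (p + q) (permute (Suc m) \<pi> (partial_prods p q m m Ys))"
proof -
  have gl: "Ys ! i \<in> gl p q" if "i < Suc (2 * m)" for i
    using that Ys by (metis nth_mem subsetD)
  have block: "mprod (p + q) (map ((!) Ys) (block J)) = partial_prods p q m m Ys ! J"
    if "J < Suc m" for J
    using that by (cases J) (auto simp: partial_prods_def pair_prod_def mprod_def mmult_mone_right gl)
  have "set (concat (map (\<lambda>I. map ((!) Ys) (block (\<pi> I))) [0..<Suc m])) \<subseteq> gl p q"
    using set_permute_subset[OF block_perm_permutes[OF \<pi>] Ys(1)] Ys(2)
    by (simp only: permute_block_perm[OF \<pi>])
  then have "mprod (p + q) (permute (Suc (2 * m)) (block_perm m \<pi>) Ys)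
      = mprod (p + q) (map (\<lambda>I. mprod (p + q) (map ((!) Ys) (block (\<pi> I)))) [0..<Suc m])"
    by (simp add: permute_block_perm[OF \<pi>] mprod_concat o_def del: upt_Suc)
  also have "\<dots> = mprod (p + q) (permute (Suc m) \<pi> (partial_prods p q m m Ys))"
    unfolding permute_def using permutes_lessThan_in[OF \<pi>] block
    by (intro arg_cong[where f = "mprod (p + q)"] map_cong) auto
  finally show ?thesis .
qed

text \<open>Each block permutation of \<open>Y\<^sub>0, Y\<^sub>1 Y\<^sub>2, \<dots>\<close> is a permutation of the \<open>Y\<^sub>i\<close>
  with the same Koszul sign, so it is absorbed by the antisymmetrization.\<close>

lemma altz_Psym_block_prods:
  assumes Xs: "length Xs = Suc (2 * m)" "\<And>X. X \<in> set Xs \<Longrightarrow> homog p q X"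
  shows "altz p (Suc (2 * m)) (\<lambda>Ys. Psym p q (block_parity p Ys) (partial_prods p q m m Ys)) Xs
    = fact (Suc m) * Lamk p q (Suc (2 * m)) Xs"
proof -
  let ?n = "Suc (2 * m)"
  let ?str = "\<lambda>Zs. str p q (mprod (p + q) Zs)"
  have "altz p ?n (\<lambda>Ys. Psym p q (block_parity p Ys) (partial_prods p q m m Ys)) Xs
      = altz p ?n (\<lambda>Ys. \<Sum>\<pi>\<in>{\<pi>. \<pi> permutes {..<Suc m}}. 1 *
          (alt_sign p ?n (block_perm m \<pi>) Ys * ?str (permute ?n (block_perm m \<pi>) Ys))) Xs"
  proof (rule altz_cong)
    fix \<sigma> assume \<sigma>: "\<sigma> permutes {..<?n}"
    have "set (permute ?n \<sigma> Xs) \<subseteq> gl p q"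
      using set_permute_subset[OF \<sigma> Xs(1)] Xs(2) homog_gl by blast
    then show "Psym p q (block_parity p (permute ?n \<sigma> Xs)) (partial_prods p q m m (permute ?n \<sigma> Xs))
        = (\<Sum>\<pi>\<in>{\<pi>. \<pi> permutes {..<Suc m}}. 1 * (alt_sign p ?n (block_perm m \<pi>) (permute ?n \<sigma> Xs)
            * ?str (permute ?n (block_perm m \<pi>) (permute ?n \<sigma> Xs))))"
      by (simp add: Psym_eq_sum alt_sign_block_perm mprod_permute_block_perm)
  qed
  also have "\<dots> = (\<Sum>\<pi>\<in>{\<pi>. \<pi> permutes {..<Suc m}}. 1 * altz p ?n ?str Xs)"
    unfolding altz_sum
    by (intro sum.cong refl) (simp add: altz_reindex[OF block_perm_permutes, of _ m p ?str])
  also have "\<dots> = fact (Suc m) * Lamk p q ?n Xs"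
    by (simp add: card_permutations Lamk_eq_altz algebra_simps)
  finally show ?thesis .
qed

lemma Pk_Cons_pair_brackets_eq_Psym:
  assumes Ys: "length Ys = Suc (2 * m)" "\<And>Y. Y \<in> set Ys \<Longrightarrow> homog p q Y"
  shows "Pk p q (Suc m) (hd Ys # pair_brackets p q m (tl Ys))
    = Psym p q (block_parity p Ys) (partial_prods p q m 0 Ys)"
proof -
  have list: "hd Ys # pair_brackets p q m (tl Ys) = partial_prods p q m 0 Ys"
    using Ys(1) by (cases Ys) (auto simp: partial_prods_def pair_brackets_def pair_bracket_def)
  have "Psym p q (\<lambda>a. par p (partial_prods p q m 0 Ys ! a) = 1) (partial_prods p q m 0 Ys)
      = Psym p q (block_parity p Ys) (partial_prods p q m 0 Ys)"
  proof (rule Psym_cong)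
    fix i assume i: "i < length (partial_prods p q m 0 Ys)"
      and nonzero: "partial_prods p q m 0 Ys ! i \<noteq> (\<lambda>i j. 0)"
    show "(par p (partial_prods p q m 0 Ys ! i) = 1) = block_parity p Ys i"
    proof (cases i)
      case (Suc j)
      then have "homogeneous p (partial_prods p q m 0 Ys ! i)
          (par p (Ys ! (2 * j + 1)) + par p (Ys ! (2 * j + 2)))"
        using i Ys by (auto simp: partial_prods_def pair_bracket_def intro!: homogeneous_sbracket_par)
      moreover obtain r s where "(partial_prods p q m 0 Ys ! i) r s \<noteq> 0"
        using nonzero[unfolded fun_eq_iff] by blast
      ultimately have "par p (partial_prods p q m 0 Ys ! i)
          = (par p (Ys ! (2 * j + 1)) + par p (Ys ! (2 * j + 2))) mod 2"
        by (rule par_of_homogeneous)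
      then have "par p (partial_prods p q m 0 Ys ! i) = 1
          \<longleftrightarrow> odd (par p (Ys ! (2 * j + 1)) + par p (Ys ! (2 * j + 2)))"
        by presburger
      moreover have "2 * i - 1 = 2 * j + 1" "2 * i = 2 * j + 2"
        using Suc by simp_all
      ultimately show ?thesis
        using Suc by (simp only: block_parity_def) simp
    qed (simp add: partial_prods_def block_parity_def)
  qed
  then show ?thesis
    by (simp add: list Pk_eq_Psym)
qed

lemma partial_prods_transpose_pair:
  assumes "j < m"
  shows "(partial_prods p q m j (permute (Suc (2 * m)) (transpose (2 * j + 1) (2 * j + 2)) Ys))[Suc j := X]
    = (partial_prods p q m j Ys)[Suc j := X]"
proof (rule nth_equalityI)
  fix i assume "i < length ((partial_prods p q m j
      (permute (Suc (2 * m)) (transpose (2 * j + 1) (2 * j + 2)) Ys))[Suc j := X])"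
  then have "i < Suc m" by simp
  then show "(partial_prods p q m j (permute (Suc (2 * m)) (transpose (2 * j + 1) (2 * j + 2)) Ys))[Suc j := X] ! i
      = (partial_prods p q m j Ys)[Suc j := X] ! i"
    using assms
    by (cases i) (auto simp: partial_prods_def pair_prod_def pair_bracket_def nth_list_update
        transpose_def)
qed simp

lemma block_parity_transpose_pair:
  assumes "j < m" "i < Suc m"
  shows "block_parity p (permute (Suc (2 * m)) (transpose (2 * j + 1) (2 * j + 2)) Ys) i
    = block_parity p Ys i"
proof (cases i)
  case (Suc i')
  then have "2 * i - 1 = 2 * i' + 1" "2 * i = 2 * i' + 2" by simp_all
  then show ?thesis
    using assms Suc by (cases "i' = j") (auto simp: block_parity_def transpose_def)
qed (simp add: block_parity_def transpose_def)

lemma alt_sign_transpose_pair: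
  assumes "j < m"
  shows "alt_sign p (Suc (2 * m)) (transpose (2 * j + 1) (2 * j + 2)) Ys
    = - ((-1) ^ (par p (Ys ! (2 * j + 1)) * par p (Ys ! (2 * j + 2))))"
proof -
  have "koszul p (Suc (2 * m)) (transpose (2 * j + 1) (Suc (2 * j + 1))) Ys
      = (if par p (Ys ! (2 * j + 1)) = 1 \<and> par p (Ys ! (2 * j + 2)) = 1 then -1 else 1)"
    using assms koszul_sign_adjacent_transpose[of "2 * j + 1" "Suc (2 * m)"]
    by (simp add: koszul_eq_koszul_sign)
  then show ?thesis
    using par_cases[of p "Ys ! (2 * j + 1)"] par_cases[of p "Ys ! (2 * j + 2)"]
    by (auto simp: alt_sign_def sign_swap_id)
qed

lemma partial_prods_Suc:
  assumes "j < m"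
  shows "partial_prods p q m (Suc j) Ys
    = (partial_prods p q m j Ys)[Suc j := mmult (p + q) (Ys ! (2 * j + 1)) (Ys ! (2 * j + 2))]"
  by (rule nth_equalityI) (use assms in \<open>auto simp: partial_prods_def nth_list_update pair_prod_def
      nth_Cons split: nat.splits\<close>)

lemma Psym_partial_prods_bracket:
  assumes "j < m"
  shows "Psym p q D (partial_prods p q m j Ys)
    = Psym p q D ((partial_prods p q m j Ys)[Suc j := mmult (p + q) (Ys ! (2 * j + 1)) (Ys ! (2 * j + 2))])
      + - ((-1) ^ (par p (Ys ! (2 * j + 1)) * par p (Ys ! (2 * j + 2))))
        * Psym p q D ((partial_prods p q m j Ys)[Suc j := mmult (p + q) (Ys ! (2 * j + 2)) (Ys ! (2 * j + 1))])"
proof -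
  let ?s = "(-1) ^ (par p (Ys ! (2 * j + 1)) * par p (Ys ! (2 * j + 2))) :: complex"
  let ?ab = "mmult (p + q) (Ys ! (2 * j + 1)) (Ys ! (2 * j + 2))"
  let ?ba = "mmult (p + q) (Ys ! (2 * j + 2)) (Ys ! (2 * j + 1))"
  have "partial_prods p q m j Ys ! Suc j = (\<lambda>i l. 1 * ?ab i l + (- ?s) * ?ba i l)"
    using assms by (simp add: partial_prods_def pair_bracket_def sbracket_def)
  then have "Psym p q D (partial_prods p q m j Ys)
      = Psym p q D ((partial_prods p q m j Ys)[Suc j := (\<lambda>i l. 1 * ?ab i l + (- ?s) * ?ba i l)])"
    by (metis list_update_id)
  also have "\<dots> = 1 * Psym p q D ((partial_prods p q m j Ys)[Suc j := ?ab])
      + (- ?s) * Psym p q D ((partial_prods p q m j Ys)[Suc j := ?ba])"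
    using assms by (intro Psym_list_update_add) simp
  finally show ?thesis by simp
qed

text \<open>The transposition of the two arguments carries the term \<open>Y\<^sub>b Y\<^sub>a\<close> of a
  bracket \<open>[Y\<^sub>a, Y\<^sub>b]\<close> to \<open>Y\<^sub>a Y\<^sub>b\<close>, and its sign cancels the sign in the super
  bracket.\<close>

lemma altz_Psym_swap_pair:
  assumes "j < m"
  shows "altz p (Suc (2 * m)) (\<lambda>Ys. - ((-1) ^ (par p (Ys ! (2 * j + 1)) * par p (Ys ! (2 * j + 2))))
      * Psym p q (block_parity p Ys)
          ((partial_prods p q m j Ys)[Suc j := mmult (p + q) (Ys ! (2 * j + 2)) (Ys ! (2 * j + 1))])) Xs
    = altz p (Suc (2 * m)) (\<lambda>Ys. Psym p q (block_parity p Ys)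
          ((partial_prods p q m j Ys)[Suc j := mmult (p + q) (Ys ! (2 * j + 1)) (Ys ! (2 * j + 2))])) Xs"
proof -
  let ?n = "Suc (2 * m)"
  let ?H = "\<lambda>Ys A B. Psym p q (block_parity p Ys) ((partial_prods p q m j Ys)[Suc j := mmult (p + q) A B])"
  let ?a = "\<lambda>Ys::smat list. Ys ! (2 * j + 1)" and ?b = "\<lambda>Ys::smat list. Ys ! (2 * j + 2)"
  let ?s = "\<lambda>Ys. (-1) ^ (par p (?a Ys) * par p (?b Ys)) :: complex"
  let ?\<rho> = "transpose (2 * j + 1) (2 * j + 2)"
  have swapped: "alt_sign p ?n ?\<rho> Ys * (- ?s (permute ?n ?\<rho> Ys)
      * ?H (permute ?n ?\<rho> Ys) (?b (permute ?n ?\<rho> Ys)) (?a (permute ?n ?\<rho> Ys)))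
    = ?H Ys (?a Ys) (?b Ys)" for Ys
  proof -
    let ?Y = "permute ?n ?\<rho> Ys"
    have swap: "?a ?Y = ?b Ys" "?b ?Y = ?a Ys"
      using assms by (simp_all add: transpose_def)
    moreover have "Psym p q (block_parity p ?Y) L = Psym p q (block_parity p Ys) L"
      if "length L = Suc m" for L
      using that by (intro Psym_cong block_parity_transpose_pair[OF assms]) simp
    ultimately have "?H ?Y (?b ?Y) (?a ?Y) = ?H Ys (?a Ys) (?b Ys)"
      unfolding partial_prods_transpose_pair[OF assms] by simp
    moreover have "alt_sign p ?n ?\<rho> Ys * - ?s ?Y = 1"
      unfolding alt_sign_transpose_pair[OF assms] swap mult.commute[of "par p (?b Ys)"]
      by (simp flip: power_add)
    ultimately show ?thesis
      by (simp only: mult.assoc[symmetric] mult_1)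
  qed
  have "?\<rho> permutes {..<?n}"
    using assms by (intro permutes_swap_id) auto
  then have "altz p ?n (\<lambda>Ys. - ?s Ys * ?H Ys (?b Ys) (?a Ys)) Xs
      = altz p ?n (\<lambda>Ys. alt_sign p ?n ?\<rho> Ys * (- ?s (permute ?n ?\<rho> Ys)
          * ?H (permute ?n ?\<rho> Ys) (?b (permute ?n ?\<rho> Ys)) (?a (permute ?n ?\<rho> Ys)))) Xs"
    by (rule altz_reindex[symmetric])
  also have "\<dots> = altz p ?n (\<lambda>Ys. ?H Ys (?a Ys) (?b Ys)) Xs"
    by (simp only: swapped)
  finally show ?thesis by simp
qed

text \<open>Under the antisymmetrization, a bracket \<open>[Y\<^sub>a, Y\<^sub>b]\<close> may thus be replaced by
  \<open>2 Y\<^sub>a Y\<^sub>b\<close>.\<close>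

lemma altz_Psym_partial_prods_Suc:
  assumes "j < m"
  shows "altz p (Suc (2 * m)) (\<lambda>Ys. Psym p q (block_parity p Ys) (partial_prods p q m j Ys)) Xs
    = 2 * altz p (Suc (2 * m)) (\<lambda>Ys. Psym p q (block_parity p Ys) (partial_prods p q m (Suc j) Ys)) Xs"
proof -
  let ?n = "Suc (2 * m)"
  let ?H = "\<lambda>Ys A B. Psym p q (block_parity p Ys) ((partial_prods p q m j Ys)[Suc j := mmult (p + q) A B])"
  let ?a = "\<lambda>Ys::smat list. Ys ! (2 * j + 1)" and ?b = "\<lambda>Ys::smat list. Ys ! (2 * j + 2)"
  let ?s = "\<lambda>Ys. (-1) ^ (par p (?a Ys) * par p (?b Ys)) :: complex"
  have "altz p ?n (\<lambda>Ys. Psym p q (block_parity p Ys) (partial_prods p q m j Ys)) Xs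
      = altz p ?n (\<lambda>Ys. ?H Ys (?a Ys) (?b Ys) + - ?s Ys * ?H Ys (?b Ys) (?a Ys)) Xs"
    by (simp only: Psym_partial_prods_bracket[OF assms])
  also have "\<dots> = altz p ?n (\<lambda>Ys. ?H Ys (?a Ys) (?b Ys)) Xs + altz p ?n (\<lambda>Ys. ?H Ys (?a Ys) (?b Ys)) Xs"
    by (simp only: altz_add altz_Psym_swap_pair[OF assms])
  finally show ?thesis
    by (simp add: partial_prods_Suc[OF assms])
qed

lemma altz_Pk_Cons_pair_brackets:
  assumes Xs: "length Xs = Suc (2 * m)" "\<And>X. X \<in> set Xs \<Longrightarrow> homog p q X"
  shows "altz p (Suc (2 * m)) (\<lambda>Ys. Pk p q (Suc m) (hd Ys # pair_brackets p q m (tl Ys))) Xs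
    = 2 ^ m * fact (Suc m) * Lamk p q (Suc (2 * m)) Xs"
proof -
  let ?A = "\<lambda>j. altz p (Suc (2 * m)) (\<lambda>Ys. Psym p q (block_parity p Ys) (partial_prods p q m j Ys)) Xs"
  have "altz p (Suc (2 * m)) (\<lambda>Ys. Pk p q (Suc m) (hd Ys # pair_brackets p q m (tl Ys))) Xs = ?A 0"
    using set_permute_subset[OF _ Xs(1)] Xs(2)
    by (intro altz_cong Pk_Cons_pair_brackets_eq_Psym) auto
  also have "?A 0 = 2 ^ j * ?A j" if "j \<le> m" for j
    using that by (induction j) (simp_all add: altz_Psym_partial_prods_Suc)
  then have "?A 0 = 2 ^ m * ?A m" by simp
  also have "?A m = fact (Suc m) * Lamk p q (Suc (2 * m)) Xs"
    using altz_Psym_block_prods[OF Xs] .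
  finally show ?thesis by simp
qed

theorem theorem4p1:
  fixes p q k :: nat and Xs :: "smat list"
  assumes "k \<ge> 1"
    and "length Xs = 2 * k - 1"
    and "\<forall>X\<in>set Xs. homog p q X"
  shows "transg p q k (Pk p q k) Xs = (-1) ^ (k - 1) * of_nat k * Lamk p q (2 * k - 1) Xs"
proof -
  obtain m where k: "k = Suc m"
    using assms(1) by (cases k) auto
  have Xs: "length Xs = Suc (2 * m)" "\<And>X. X \<in> set Xs \<Longrightarrow> homog p q X"
    using assms k by auto
  have "transg p q k (Pk p q k) Xs
      = (-1) ^ m / (fact m * 2 ^ m) * (2 ^ m * fact (Suc m) * Lamk p q (Suc (2 * m)) Xs)"
    unfolding k by (simp only: transg_Pk_eq_altz_pair_brackets[OF Xs] altz_Pk_Cons_pair_brackets[OF Xs])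
  also have "\<dots> = (-1) ^ m * of_nat (Suc m) * Lamk p q (Suc (2 * m)) Xs"
    by (simp add: field_simps)
  finally show ?thesis
    using k by simp
qed

end
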